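(* Let $v_1,\dots,v_m\in\mathbb{C}^d$ with $m$ even, $\sum_{i=1}^m v_iv_i^*=\mathbb{I}$, $\|v_i\|^2=\alpha$ for all $i$, and $\alpha\le\frac{1}{221d}$. Run Algorithm 1 (described in the context) and fix an iteration $0\le j<m/2$. Suppose that for every $0\le j'\le j$ we have $u_{j'}-\lambda_{\max}(A_{j'})\ge 1/3$ and $\kappa(u_{j'}\mathbb{I}-A_{j'})\le 3/2$. Write $A=A_j$, $\mathcal{B}=\mathcal{B}_j$, $u=u_j$, $\widehat u=u_{j+1}$. Then \[ \sum_{v\in\mathcal{B}}\Big(\Phi^u(A)-\Phi^{\widehat u}(A+vv^* )\Big)\ge(m-j)\cdot\mathrm{tr}\Big[\log\big((u\mathbb{I}-A)^{-1}(\widehat u\mathbb{I}-A)\big)\Big]+\frac1\alpha\cdot\frac{m-j}{m}\cdot\mathrm{tr}\Big[\log\big(\mathbb{I}-\alpha(\widehat u\mathbb{I}-A)^{-1}\big)\Big]. \]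
   Context: For a Hermitian matrix $A$ and $u\in\mathbb{R}$ with $u\mathbb{I}-A$ positive definite, $\Phi^u(A)=\mathrm{tr}\log\big((u\mathbb{I}-A)^{-1}\big)=-\log\det(u\mathbb{I}-A)$, with $\log$ the matrix logarithm. Algorithm 1: set $A_0=\mathbf{0}_{d\times d}$, $\mathcal{A}_0=\emptyset$, $\mathcal{B}_0=\{v_1,\dots,v_m\}$, $u_0=1/2$, $\delta_u=\alpha/d$. For $j=0,\dots,m/2-1$: set $u_{j+1}=u_j+\delta_u$; choose $v_j\in\mathcal{B}_j$ maximising $\det(u_{j+1}\mathbb{I}-A_j-vv^* )$ over $v\in\mathcal{B}_j$ (ties arbitrary); set $A_{j+1}=A_j+v_jv_j^*$, $\mathcal{A}_{j+1}=\mathcal{A}_j\cup\{v_j\}$, $\mathcal{B}_{j+1}=\mathcal{B}_j\setminus\{v_j\}$. $\kappa(B)=\lambda_{\max}(B)/\lambda_{\min}(B)$ for Hermitian positive definite $B$. *)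

theory Defs
  imports "Jordan_Normal_Form.Jordan_Normal_Form" "Jordan_Normal_Form.Gauss_Jordan_Elimination"
    "HOL-Computational_Algebra.Polynomial"
begin

definition outer :: "complex vec \<Rightarrow> complex mat" where
  "outer v = mat (dim_vec v) (dim_vec v) (\<lambda>(i,k). v $ i * cnj (v $ k))"

fun msum :: "nat \<Rightarrow> (nat \<Rightarrow> complex mat) \<Rightarrow> nat \<Rightarrow> complex mat" where
  "msum d f 0 = 0\<^sub>m d d"
| "msum d f (Suc n) = msum d f n + f n"

definition sqnorm :: "complex vec \<Rightarrow> real" where
  "sqnorm v = (\<Sum>i<dim_vec v. (cmod (v $ i))^2)"

text \<open>Matrix inverse (junk value for singular matrices).\<close>
definition minv :: "complex mat \<Rightarrow> complex mat" where
  "minv M = (case mat_inverse M of Some N \<Rightarrow> N | None \<Rightarrow> 0\<^sub>m (dim_row M) (dim_row M))"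

definition eigs :: "complex mat \<Rightarrow> complex multiset" where
  "eigs M = proots (char_poly M)"

definition lmax :: "complex mat \<Rightarrow> real" where
  "lmax M = Max (Re ` set_mset (eigs M))"

definition lmin :: "complex mat \<Rightarrow> real" where
  "lmin M = Min (Re ` set_mset (eigs M))"

definition kappa :: "complex mat \<Rightarrow> real" where
  "kappa M = lmax M / lmin M"

text \<open>tr log M for a matrix with positive real spectrum (e.g. Hermitian positive definite,
  or a product of commuting such matrices): trace of the matrix logarithm = sum of
  logarithms of the eigenvalues with multiplicity.\<close>
definition trlog :: "complex mat \<Rightarrow> real" where
  "trlog M = (\<Sum>z\<in>#eigs M. ln (Re z))"

definition Phi :: "nat \<Rightarrow> real \<Rightarrow> complex mat \<Rightarrow> real" where
  "Phi d u A = trlog (minv (of_real u \<cdot>\<^sub>m 1\<^sub>m d - A))"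

text \<open>Algorithm 1, run with a choice sequence \<sigma> of indices (index \<sigma> j is the vector
  chosen at iteration j).  u_j = 1/2 + j \<alpha>/d.\<close>
definition ualg :: "real \<Rightarrow> nat \<Rightarrow> nat \<Rightarrow> real" where
  "ualg \<alpha> d j = 1/2 + real j * (\<alpha> / real d)"

fun Aalg :: "nat \<Rightarrow> (nat \<Rightarrow> complex vec) \<Rightarrow> (nat \<Rightarrow> nat) \<Rightarrow> nat \<Rightarrow> complex mat" where
  "Aalg d v \<sigma> 0 = 0\<^sub>m d d"
| "Aalg d v \<sigma> (Suc j) = Aalg d v \<sigma> j + outer (v (\<sigma> j))"

definition Balg :: "nat \<Rightarrow> (nat \<Rightarrow> nat) \<Rightarrow> nat \<Rightarrow> nat set" where
  "Balg m \<sigma> j = {0..<m} - \<sigma> ` {..<j}"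

text \<open>\<sigma> is a valid run of Algorithm 1 (ties broken arbitrarily).\<close>
definition alg_run :: "nat \<Rightarrow> nat \<Rightarrow> real \<Rightarrow> (nat \<Rightarrow> complex vec) \<Rightarrow> (nat \<Rightarrow> nat) \<Rightarrow> bool" where
  "alg_run d m \<alpha> v \<sigma> \<longleftrightarrow>
     (\<forall>j < m div 2. \<sigma> j \<in> Balg m \<sigma> j \<and>
        (\<forall>k \<in> Balg m \<sigma> j.
           Re (det (of_real (ualg \<alpha> d (Suc j)) \<cdot>\<^sub>m 1\<^sub>m d - Aalg d v \<sigma> j - outer (v k)))
           \<le> Re (det (of_real (ualg \<alpha> d (Suc j)) \<cdot>\<^sub>m 1\<^sub>m d - Aalg d v \<sigma> j - outer (v (\<sigma> j))))))"

end

theory Submission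
  imports Defs "Jordan_Normal_Form.Schur_Decomposition"
begin

text \<open>
Diagonalise A = U diag(lam) U^* and let w_i = |(U^* v)_i|^2 be the weights of a vector v in the
eigenbasis. The matrix determinant lemma gives
  Phi^u(A) - Phi^u'(A + v v^*) = sum_i (ln (u' - lam_i) - ln (u - lam_i)) + ln (1 - sum_i w_i / (u' - lam_i)),
which is meaningful because the eigenvalues of A + v v^* stay below lam_max(A) + alpha < u'.
Since the w_i / alpha are probability weights, concavity of ln bounds the last term from below by
(1/alpha) sum_i w_i ln (1 - alpha / (u' - lam_i)). Summed over the unused vectors, isotropy turns the
weights into 1 - lam_i; as 1 - lam_i and ln (1 - alpha / (u' - lam_i)) are similarly ordered,
Chebyshev's sum inequality together with tr A_j = j alpha and m alpha = d produces the factor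
(m - j) / m. The first term is nonnegative and occurs |B| >= m - j times.
\<close>

section \<open>Unitary conjugates of diagonal matrices\<close>

lemma mat_adjoint_carrier[simp]: "U \<in> carrier_mat n m \<Longrightarrow> mat_adjoint U \<in> carrier_mat m n"
  unfolding mat_adjoint_def by auto

lemma dim_mat_adjoint[simp]:
  "dim_row (mat_adjoint U) = dim_col U" "dim_col (mat_adjoint U) = dim_row U"
  unfolding mat_adjoint_def by auto

lemma index_mat_adjoint[simp]:
  "i < dim_col U \<Longrightarrow> j < dim_row U \<Longrightarrow> mat_adjoint U $$ (i,j) = cnj (U $$ (j,i))"
  unfolding mat_adjoint_def by (simp add: mat_of_rows_index)

lemma index_mat_diag[simp]:
  "i < n \<Longrightarrow> j < n \<Longrightarrow> mat_diag n f $$ (i,j) = (if i = j then f i else 0)"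
  unfolding mat_diag_def by auto

lemma dim_mat_diag[simp]: "dim_row (mat_diag n f) = n" "dim_col (mat_diag n f) = n"
  unfolding mat_diag_def by auto

lemma diag_mat_mat_diag: "diag_mat (mat_diag n f) = map f [0..<n]"
  unfolding diag_mat_def by (intro map_cong) auto

lemma upper_triangular_mat_diag: "upper_triangular (mat_diag n f)"
  unfolding upper_triangular_def by auto

lemma index_mult_mat_vec_sum:
  "M \<in> carrier_mat n n \<Longrightarrow> y \<in> carrier_vec n \<Longrightarrow> a < n \<Longrightarrow> (M *\<^sub>v y) $ a = (\<Sum>b<n. M$$(a,b) * y$b)"
  by (auto simp: scalar_prod_def atLeast0LessThan intro!: sum.cong)

lemma index_mult_mat_diag_vec:
  assumes "w \<in> carrier_vec n" "i < n"
  shows "(mat_diag n f *\<^sub>v w) $ i = f i * w $ i"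
proof -
  have "(mat_diag n f *\<^sub>v w) $ i = (\<Sum>b<n. (if i = b then f i else 0) * w$b)"
    using index_mult_mat_vec_sum[OF mat_diag_dim assms] assms by simp
  also have "\<dots> = (\<Sum>b<n. if b = i then f i * w$b else 0)" by (rule sum.cong) auto
  finally show ?thesis using assms by (simp add: sum.delta')
qed

definition unitary :: "nat \<Rightarrow> complex mat \<Rightarrow> bool" where
  "unitary n U \<longleftrightarrow> U \<in> carrier_mat n n \<and> mat_adjoint U * U = 1\<^sub>m n \<and> U * mat_adjoint U = 1\<^sub>m n"

lemma unitaryD:
  assumes "unitary n U"
  shows "U \<in> carrier_mat n n" "mat_adjoint U * U = 1\<^sub>m n" "U * mat_adjoint U = 1\<^sub>m n"
  using assms unfolding unitary_def by auto

lemma unitary_orthonormal_rows: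
  assumes "unitary n U" "a < n" "b < n"
  shows "(\<Sum>i<n. U$$(a,i) * cnj (U$$(b,i))) = (if a = b then 1 else 0)"
proof -
  have "(U * mat_adjoint U) $$ (a,b) = (\<Sum>i<n. U$$(a,i) * cnj (U$$(b,i)))"
    using unitaryD(1)[OF assms(1)] assms by (auto simp: scalar_prod_def atLeast0LessThan intro!: sum.cong)
  then show ?thesis using unitaryD(3)[OF assms(1)] assms by simp
qed

lemma unitary_orthonormal_cols:
  assumes "unitary n U" "a < n" "b < n"
  shows "(\<Sum>i<n. cnj (U$$(i,a)) * U$$(i,b)) = (if a = b then 1 else 0)"
proof -
  have "(mat_adjoint U * U) $$ (a,b) = (\<Sum>i<n. cnj (U$$(i,a)) * U$$(i,b))"
    using unitaryD(1)[OF assms(1)] assms by (auto simp: scalar_prod_def atLeast0LessThan intro!: sum.cong)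
  then show ?thesis using unitaryD(2)[OF assms(1)] assms by simp
qed

lemma similar_mat_unitary_diag:
  assumes "unitary n U"
  shows "similar_mat (U * mat_diag n f * mat_adjoint U) (mat_diag n f)"
proof -
  have "similar_mat_wit (U * mat_diag n f * mat_adjoint U) (mat_diag n f) U (mat_adjoint U)"
    unfolding similar_mat_wit_def Let_def using unitaryD[OF assms] by auto
  then show ?thesis unfolding similar_mat_def by blast
qed

lemma proots_prod_list_linear_factors:
  "proots (\<Prod>a\<leftarrow>xs. [:- a, 1:]) = mset (xs :: complex list)"
proof (induction xs)
  case (Cons a xs)
  have "(\<Prod>a\<leftarrow>xs. [:- a, 1:]) \<noteq> (0::complex poly)"
    by (auto simp: prod_list_zero_iff)
  then have "proots (\<Prod>a\<leftarrow>a#xs. [:- a, 1:]) = proots [:- a, 1:] + proots (\<Prod>a\<leftarrow>xs. [:- a, 1:])"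
    using proots_mult[of "[:- a, 1:]"] by simp
  then show ?case using Cons proots_linear_factor[of "-a"] by simp
qed simp

lemma eigs_unitary_diag:
  assumes "unitary n U"
  shows "eigs (U * mat_diag n f * mat_adjoint U) = mset (map f [0..<n])"
proof -
  have "char_poly (U * mat_diag n f * mat_adjoint U) = char_poly (mat_diag n f)"
    by (rule char_poly_similar[OF similar_mat_unitary_diag[OF assms]])
  also have "\<dots> = (\<Prod>a\<leftarrow>map f [0..<n]. [:- a, 1:])"
    using char_poly_upper_triangular[OF mat_diag_dim upper_triangular_mat_diag] diag_mat_mat_diag
    by metis
  finally show ?thesis unfolding eigs_def by (metis proots_prod_list_linear_factors)
qed

lemma det_unitary_diag:
  assumes "unitary n U"
  shows "det (U * mat_diag n f * mat_adjoint U) = (\<Prod>i<n. f i)"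
proof -
  have "det (U * mat_diag n f * mat_adjoint U) = det (mat_diag n f)"
    by (rule det_similar[OF similar_mat_unitary_diag[OF assms]])
  also have "\<dots> = prod_list (map f [0..<n])"
    using det_upper_triangular[OF upper_triangular_mat_diag mat_diag_dim] diag_mat_mat_diag by metis
  finally show ?thesis by (simp add: prod.distinct_set_conv_list[symmetric] atLeast0LessThan)
qed

lemma trlog_unitary_diag:
  assumes "unitary n U"
  shows "trlog (U * mat_diag n f * mat_adjoint U) = (\<Sum>i<n. ln (Re (f i)))"
proof -
  have "trlog (U * mat_diag n f * mat_adjoint U) = sum_list (map (\<lambda>z. ln (Re z)) (map f [0..<n]))"
    unfolding trlog_def eigs_unitary_diag[OF assms] by (metis mset_map sum_mset_sum_list)
  then show ?thesis by (simp add: interv_sum_list_conv_sum_set_nat atLeast0LessThan)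
qed

lemma trlog_carrier_0: "M \<in> carrier_mat 0 0 \<Longrightarrow> trlog M = 0"
proof -
  assume "M \<in> carrier_mat 0 0"
  then obtain es where "char_poly M = (\<Prod>a\<leftarrow>es. [:- a, 1:])" "length es = 0"
    using char_poly_factorized by blast
  then show ?thesis unfolding trlog_def eigs_def by simp
qed

lemma minv_eqI:
  assumes A: "A \<in> carrier_mat n n" and B: "B \<in> carrier_mat n n" and AB: "A * B = 1\<^sub>m n"
  shows "minv A = B"
proof -
  have BA: "B * A = 1\<^sub>m n" by (rule mat_mult_left_right_inverse[OF A B AB])
  show ?thesis
  proof (cases "mat_inverse A")
    case None
    have "A \<in> Units (ring_mat TYPE(complex) n undefined)"
      unfolding Units_def ring_mat_def using A B AB BA by auto
    then show ?thesis using mat_inverse(1)[OF A None, of undefined] by blast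
  next
    case (Some C)
    then have C: "C * A = 1\<^sub>m n" "C \<in> carrier_mat n n" using mat_inverse(2)[OF A] by auto
    have "C = C * (A * B)" using C(2) AB by simp
    also have "\<dots> = B" using C A B by (simp flip: assoc_mult_mat[OF C(2) A B])
    finally show ?thesis unfolding minv_def Some by simp
  qed
qed

lemma minv_carrier: "M \<in> carrier_mat n n \<Longrightarrow> minv M \<in> carrier_mat n n"
  unfolding minv_def using mat_inverse(2) by (auto split: option.split)

lemma index_unitary_diag:
  assumes U: "U \<in> carrier_mat n n" and a: "a < n" and b: "b < n"
  shows "(U * mat_diag n f * mat_adjoint U) $$ (a,b) = (\<Sum>i<n. U$$(a,i) * f i * cnj (U$$(b,i)))"
  using assms by (simp add: mat_diag_mult_right[OF U] scalar_prod_def atLeast0LessThan)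

lemma unitary_diag_affine:
  assumes "unitary n U"
  shows "c \<cdot>\<^sub>m 1\<^sub>m n + e \<cdot>\<^sub>m (U * mat_diag n f * mat_adjoint U)
         = U * mat_diag n (\<lambda>i. c + e * f i) * mat_adjoint U"
proof -
  have U: "U \<in> carrier_mat n n" by (rule unitaryD(1)[OF assms])
  show ?thesis
  proof (rule eq_matI)
    fix a b assume "a < dim_row (U * mat_diag n (\<lambda>i. c + e * f i) * mat_adjoint U)"
      and "b < dim_col (U * mat_diag n (\<lambda>i. c + e * f i) * mat_adjoint U)"
    then have a: "a < n" and b: "b < n" using U by auto
    have "(U * mat_diag n (\<lambda>i. c + e * f i) * mat_adjoint U) $$ (a,b)
        = c * (\<Sum>i<n. U$$(a,i) * cnj (U$$(b,i))) + e * (\<Sum>i<n. U$$(a,i) * f i * cnj (U$$(b,i)))"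
      unfolding index_unitary_diag[OF U a b]
      by (simp add: algebra_simps sum.distrib sum_distrib_left)
    then show "(c \<cdot>\<^sub>m 1\<^sub>m n + e \<cdot>\<^sub>m (U * mat_diag n f * mat_adjoint U)) $$ (a,b)
             = (U * mat_diag n (\<lambda>i. c + e * f i) * mat_adjoint U) $$ (a,b)"
      using a b U unitary_orthonormal_rows[OF assms a b] index_unitary_diag[OF U a b] by simp
  qed (use U in auto)
qed

lemma unitary_diag_diff:
  assumes "unitary n U"
  shows "c \<cdot>\<^sub>m 1\<^sub>m n - U * mat_diag n f * mat_adjoint U = U * mat_diag n (\<lambda>i. c - f i) * mat_adjoint U"
proof -
  have U: "U \<in> carrier_mat n n" by (rule unitaryD(1)[OF assms])
  have "c \<cdot>\<^sub>m 1\<^sub>m n - U * mat_diag n f * mat_adjoint U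
      = c \<cdot>\<^sub>m 1\<^sub>m n + (-1) \<cdot>\<^sub>m (U * mat_diag n f * mat_adjoint U)"
    by (rule eq_matI) (use U in auto)
  then show ?thesis using unitary_diag_affine[OF assms, of c "-1" f] by simp
qed

lemma unitary_diag_mult:
  assumes "unitary n U"
  shows "(U * mat_diag n f * mat_adjoint U) * (U * mat_diag n g * mat_adjoint U)
         = U * mat_diag n (\<lambda>i. f i * g i) * mat_adjoint U"
proof -
  note U = unitaryD[OF assms]
  have c: "U \<in> carrier_mat n n" "mat_adjoint U \<in> carrier_mat n n"
    "mat_diag n f \<in> carrier_mat n n" "mat_diag n g \<in> carrier_mat n n" using U by auto
  have "(U * mat_diag n f * mat_adjoint U) * (U * mat_diag n g * mat_adjoint U)
      = (U * mat_diag n f) * (mat_adjoint U * (U * mat_diag n g * mat_adjoint U))"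
    by (rule assoc_mult_mat) (use c in auto)
  also have "mat_adjoint U * (U * mat_diag n g * mat_adjoint U) = (mat_adjoint U * (U * mat_diag n g)) * mat_adjoint U"
    by (rule assoc_mult_mat[symmetric]) (use c in auto)
  also have "mat_adjoint U * (U * mat_diag n g) = mat_diag n g"
    using assoc_mult_mat[OF c(2,1,4)] U(2) c(4) by (metis left_mult_one_mat)
  also have "(U * mat_diag n f) * (mat_diag n g * mat_adjoint U) = U * (mat_diag n f * (mat_diag n g * mat_adjoint U))"
    by (rule assoc_mult_mat) (use c in auto)
  also have "mat_diag n f * (mat_diag n g * mat_adjoint U) = (mat_diag n f * mat_diag n g) * mat_adjoint U"
    by (rule assoc_mult_mat[symmetric]) (use c in auto)
  also have "U * ((mat_diag n f * mat_diag n g) * mat_adjoint U) = U * (mat_diag n f * mat_diag n g) * mat_adjoint U"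
    by (rule assoc_mult_mat[symmetric]) (use c in auto)
  finally show ?thesis by simp
qed

lemma minv_unitary_diag:
  assumes "unitary n U" "\<And>i. i < n \<Longrightarrow> f i \<noteq> 0"
  shows "minv (U * mat_diag n f * mat_adjoint U) = U * mat_diag n (\<lambda>i. 1 / f i) * mat_adjoint U"
proof (rule minv_eqI)
  note U = unitaryD[OF assms(1)]
  show "U * mat_diag n f * mat_adjoint U \<in> carrier_mat n n"
    "U * mat_diag n (\<lambda>i. 1 / f i) * mat_adjoint U \<in> carrier_mat n n" using U by auto
  have "mat_diag n (\<lambda>i. f i * (1 / f i)) = 1\<^sub>m n"
    by (rule eq_matI) (use assms(2) in auto)
  then show "U * mat_diag n f * mat_adjoint U * (U * mat_diag n (\<lambda>i. 1 / f i) * mat_adjoint U) = 1\<^sub>m n"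
    using U unitary_diag_mult[OF assms(1)] by simp
qed

section \<open>The spectral theorem for Hermitian matrices\<close>

definition cinner :: "complex vec \<Rightarrow> complex vec \<Rightarrow> complex" where
  "cinner x y = (\<Sum>i<dim_vec x. cnj (x$i) * y$i)"

definition hermitian :: "nat \<Rightarrow> complex mat \<Rightarrow> bool" where
  "hermitian n M \<longleftrightarrow> M \<in> carrier_mat n n \<and> (\<forall>a<n. \<forall>b<n. M$$(a,b) = cnj (M$$(b,a)))"

definition trace_mat :: "complex mat \<Rightarrow> complex" where
  "trace_mat M = (\<Sum>i<dim_row M. M$$(i,i))"

lemma hermitian_carrier: "hermitian n M \<Longrightarrow> M \<in> carrier_mat n n"
  unfolding hermitian_def by blast

lemma hermitian_iff_mat_adjoint: "hermitian n M \<longleftrightarrow> M \<in> carrier_mat n n \<and> mat_adjoint M = M"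
proof
  assume "M \<in> carrier_mat n n \<and> mat_adjoint M = M"
  then show "hermitian n M"
    unfolding hermitian_def by (metis carrier_matD index_mat_adjoint)
next
  assume M: "hermitian n M"
  then have "M \<in> carrier_mat n n" "\<And>a b. a < n \<Longrightarrow> b < n \<Longrightarrow> cnj (M$$(b,a)) = M$$(a,b)"
    unfolding hermitian_def by (metis complex_cnj_cnj)+
  then show "M \<in> carrier_mat n n \<and> mat_adjoint M = M" by (auto intro!: eq_matI)
qed

lemma mat_adjoint_hermitian: "hermitian n M \<Longrightarrow> mat_adjoint M = M"
  by (simp add: hermitian_iff_mat_adjoint)

lemma hermitian_add:
  assumes "hermitian n A" "hermitian n B"
  shows "hermitian n (A + B)"
proof -
  have c: "A \<in> carrier_mat n n" "B \<in> carrier_mat n n"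
    and hA: "\<And>a b. a < n \<Longrightarrow> b < n \<Longrightarrow> A$$(a,b) = cnj (A$$(b,a))"
    and hB: "\<And>a b. a < n \<Longrightarrow> b < n \<Longrightarrow> B$$(a,b) = cnj (B$$(b,a))"
    using assms unfolding hermitian_def by blast+
  show ?thesis unfolding hermitian_def
  proof (intro conjI allI impI)
    fix a b assume "a < n" "b < n"
    then show "(A + B) $$ (a,b) = cnj ((A + B) $$ (b,a))"
      using c hA[of a b] hB[of a b] by simp
  qed (use c in simp)
qed

lemma hermitian_unitary_diag:
  assumes "unitary n U"
  shows "hermitian n (U * mat_diag n (\<lambda>i. complex_of_real (f i)) * mat_adjoint U)"
proof -
  have U: "U \<in> carrier_mat n n" by (rule unitaryD(1)[OF assms])
  show ?thesis unfolding hermitian_def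
  proof (intro conjI allI impI)
    fix a b assume ab: "a < n" "b < n"
    show "(U * mat_diag n (\<lambda>i. complex_of_real (f i)) * mat_adjoint U) $$ (a,b)
        = cnj ((U * mat_diag n (\<lambda>i. complex_of_real (f i)) * mat_adjoint U) $$ (b,a))"
      unfolding index_unitary_diag[OF U ab] index_unitary_diag[OF U ab(2) ab(1)] cnj_sum
      by (rule sum.cong) (auto simp: mult_ac)
  qed (use U in auto)
qed

lemma cinner_cnj_commute: "dim_vec x = dim_vec y \<Longrightarrow> cinner x y = cnj (cinner y x)"
  unfolding cinner_def by (simp add: mult.commute)

lemma cinner_smult_right: "dim_vec x = dim_vec y \<Longrightarrow> cinner x (e \<cdot>\<^sub>v y) = e * cinner x y"
  unfolding cinner_def by (simp add: sum_distrib_left algebra_simps)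

lemma cinner_smult_left: "cinner (e \<cdot>\<^sub>v x) y = cnj e * cinner x y"
  unfolding cinner_def by (simp add: sum_distrib_left algebra_simps)

lemma cinner_add_right:
  "dim_vec y = dim_vec x \<Longrightarrow> dim_vec z = dim_vec x \<Longrightarrow> cinner x (y + z) = cinner x y + cinner x z"
  unfolding cinner_def by (simp add: sum.distrib distrib_left)

lemma cinner_self: "cinner x x = of_real (sqnorm x)"
  unfolding cinner_def sqnorm_def of_real_sum
  by (intro sum.cong refl) (metis complex_norm_square of_real_power mult.commute)

lemma sqnorm_nonneg: "sqnorm w \<ge> 0"
  unfolding sqnorm_def by (simp add: sum_nonneg)

lemma sqnorm_pos:
  assumes "x \<in> carrier_vec n" "x \<noteq> 0\<^sub>v n"
  shows "sqnorm x > 0"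
proof -
  have "\<exists>i<n. x $ i \<noteq> 0"
  proof (rule ccontr)
    assume "\<not> ?thesis"
    then have "x = 0\<^sub>v n" using assms(1) by (intro eq_vecI) auto
    then show False using assms(2) by simp
  qed
  then obtain i where i: "i < n" "x $ i \<noteq> 0" by blast
  have "(cmod (x$i))^2 \<le> sqnorm x"
    unfolding sqnorm_def by (rule member_le_sum) (use i assms in auto)
  moreover have "(cmod (x$i))^2 > 0" using i by simp
  ultimately show ?thesis by linarith
qed

lemma cinner_normalize:
  assumes "x \<in> carrier_vec n" "x \<noteq> 0\<^sub>v n"
  shows "cinner (of_real (1 / sqrt (sqnorm x)) \<cdot>\<^sub>v x) (of_real (1 / sqrt (sqnorm x)) \<cdot>\<^sub>v x) = 1"
proof -
  define r where "r = 1 / sqrt (sqnorm x)"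
  have pos: "sqnorm x > 0" by (rule sqnorm_pos[OF assms])
  have "cinner (of_real r \<cdot>\<^sub>v x) (of_real r \<cdot>\<^sub>v x) = cnj (of_real r) * (of_real r * cinner x x)"
    by (simp only: cinner_smult_left cinner_smult_right index_smult_vec(2))
  also have "\<dots> = of_real (r * r * sqnorm x)" unfolding cinner_self by simp
  also have "r * r * sqnorm x = 1"
    unfolding r_def using pos real_sqrt_mult_self[of "sqnorm x"] by (simp add: field_simps)
  finally show ?thesis unfolding r_def by simp
qed

lemma cinner_mat_adjoint:
  assumes M: "M \<in> carrier_mat n n" and x: "x \<in> carrier_vec n" and y: "y \<in> carrier_vec n"
  shows "cinner x (M *\<^sub>v y) = cinner (mat_adjoint M *\<^sub>v x) y"
proof -
  have aM: "mat_adjoint M \<in> carrier_mat n n" using M by auto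
  have "cinner x (M *\<^sub>v y) = (\<Sum>a<n. cnj (x$a) * (\<Sum>b<n. M$$(a,b) * y$b))"
    using x by (auto simp: cinner_def index_mult_mat_vec_sum[OF M y] simp del: index_mult_mat_vec)
  also have "\<dots> = (\<Sum>a<n. \<Sum>b<n. cnj (x$a) * M$$(a,b) * y$b)"
    by (simp add: sum_distrib_left mult.assoc)
  also have "\<dots> = (\<Sum>b<n. \<Sum>a<n. cnj (mat_adjoint M $$ (b,a) * x$a) * y$b)"
    by (subst sum.swap) (use M in \<open>auto intro!: sum.cong\<close>)
  also have "\<dots> = cinner (mat_adjoint M *\<^sub>v x) y"
    using aM x
    by (auto simp: cinner_def index_mult_mat_vec_sum[OF aM x] sum_distrib_right cnj_sum
        simp del: index_mult_mat_vec)
  finally show ?thesis .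
qed

lemma hermitian_eigenvalue_real:
  assumes M: "hermitian n M" and x: "x \<in> carrier_vec n" "x \<noteq> 0\<^sub>v n" and e: "M *\<^sub>v x = e \<cdot>\<^sub>v x"
  shows "e = of_real (Re e)"
proof -
  have "e * cinner x x = cnj e * cinner x x"
    using cinner_mat_adjoint[OF hermitian_carrier[OF M] x(1) x(1)] x
    unfolding mat_adjoint_hermitian[OF M] e by (simp add: cinner_smult_right cinner_smult_left)
  moreover have "cinner x x \<noteq> 0" using sqnorm_pos[OF x] unfolding cinner_self by simp
  ultimately have "e = cnj e" by simp
  then show ?thesis by (metis Reals_cnj_iff complex_is_Real_iff of_real_Re)
qed

lemma trace_mat_mult_comm:
  assumes "A \<in> carrier_mat n m" "B \<in> carrier_mat m n"
  shows "trace_mat (A * B) = trace_mat (B * A)"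
proof -
  have "trace_mat (A * B) = (\<Sum>i<n. \<Sum>j<m. A$$(i,j) * B$$(j,i))"
    unfolding trace_mat_def using assms by (auto simp: scalar_prod_def atLeast0LessThan intro!: sum.cong)
  also have "\<dots> = (\<Sum>j<m. \<Sum>i<n. B$$(j,i) * A$$(i,j))"
    by (subst sum.swap) (simp add: mult.commute)
  also have "\<dots> = trace_mat (B * A)"
    unfolding trace_mat_def using assms by (auto simp: scalar_prod_def atLeast0LessThan intro!: sum.cong)
  finally show ?thesis .
qed

lemma trace_mat_add:
  "A \<in> carrier_mat n n \<Longrightarrow> B \<in> carrier_mat n n \<Longrightarrow> trace_mat (A + B) = trace_mat A + trace_mat B"
  unfolding trace_mat_def by (simp add: sum.distrib)

lemma trace_mat_similar_mat_wit:
  assumes "similar_mat_wit B T P Q" "B \<in> carrier_mat n n"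
  shows "trace_mat B = trace_mat T"
proof -
  have c: "T \<in> carrier_mat n n" "P \<in> carrier_mat n n" "Q \<in> carrier_mat n n" "Q * P = 1\<^sub>m n"
    "B = P * T * Q"
    using assms unfolding similar_mat_wit_def Let_def by auto
  have "trace_mat B = trace_mat (P * (T * Q))" using c by simp
  also have "\<dots> = trace_mat ((T * Q) * P)" by (rule trace_mat_mult_comm) (use c in auto)
  also have "(T * Q) * P = T" using c by simp
  finally show ?thesis .
qed

lemma exists_eigenvalue_neq:
  assumes B: "B \<in> carrier_mat n n" and tr: "trace_mat B \<noteq> of_nat n * c"
  shows "\<exists>e. eigenvalue B e \<and> e \<noteq> c"
proof (rule ccontr)
  assume no_other: "\<not> ?thesis"
  obtain es where es: "char_poly B = (\<Prod>a\<leftarrow>es. [:- a, 1:])" "length es = n"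
    using char_poly_factorized[OF B] by blast
  have all_c: "\<forall>a\<in>set es. a = c"
  proof
    fix a assume "a \<in> set es"
    then have "poly (char_poly B) a = 0"
      unfolding es(1) poly_prod_list by (auto simp: prod_list_zero_iff)
    then show "a = c" using no_other eigenvalue_root_char_poly[OF B] by blast
  qed
  obtain T P Q where S: "schur_decomposition B es = (T,P,Q)" by (cases "schur_decomposition B es") auto
  from schur_decomposition[OF B es(1) S]
  have sim: "similar_mat_wit B T P Q" and diag: "diag_mat T = es" by auto
  have T: "T \<in> carrier_mat n n" using similar_mat_witD2[OF B sim] by auto
  have "trace_mat B = trace_mat T" by (rule trace_mat_similar_mat_wit[OF sim B])
  also have "\<dots> = sum_list (diag_mat T)"
    using T unfolding trace_mat_def diag_mat_def
    by (simp add: interv_sum_list_conv_sum_set_nat atLeast0LessThan)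
  also have "\<dots> = of_nat n * c" using all_c es(2) diag
    by (metis sum_list_triv map_idI mult.commute of_nat_id)
  finally show False using tr by simp
qed

definition orthonormal :: "nat \<Rightarrow> (nat \<Rightarrow> complex vec) \<Rightarrow> bool" where
  "orthonormal k us \<longleftrightarrow> (\<forall>i<k. \<forall>j<k. cinner (us i) (us j) = (if i = j then 1 else 0))"

definition eigen_shift :: "nat \<Rightarrow> (nat \<Rightarrow> complex vec) \<Rightarrow> (nat \<Rightarrow> real) \<Rightarrow> nat \<Rightarrow> real \<Rightarrow> complex mat" where
  "eigen_shift n us lam k c = mat n n (\<lambda>(a,b). \<Sum>i<k. of_real (c - lam i) * us i $ a * cnj (us i $ b))"

lemma eigen_shift_carrier: "eigen_shift n us lam k c \<in> carrier_mat n n"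
  unfolding eigen_shift_def by auto

lemma hermitian_eigen_shift: "hermitian n (eigen_shift n us lam k c)"
  unfolding hermitian_def eigen_shift_def by (auto simp: mult.commute mult.left_commute)

lemma index_eigen_shift_mult_vec:
  assumes "\<And>i. i < k \<Longrightarrow> us i \<in> carrier_vec n" "y \<in> carrier_vec n" "a < n"
  shows "(eigen_shift n us lam k c *\<^sub>v y) $ a = (\<Sum>i<k. of_real (c - lam i) * us i $ a * cinner (us i) y)"
proof -
  have "(eigen_shift n us lam k c *\<^sub>v y) $ a
      = (\<Sum>b<n. (\<Sum>i<k. of_real (c - lam i) * us i $ a * cnj (us i $ b)) * y $ b)"
    using index_mult_mat_vec_sum[OF eigen_shift_carrier assms(2,3)] assms(3)
    unfolding eigen_shift_def by (auto intro!: sum.cong)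
  also have "\<dots> = (\<Sum>i<k. \<Sum>b<n. of_real (c - lam i) * us i $ a * (cnj (us i $ b) * y $ b))"
    by (subst sum.swap) (simp add: sum_distrib_right mult.assoc)
  also have "\<dots> = (\<Sum>i<k. of_real (c - lam i) * us i $ a * cinner (us i) y)"
    using assms(1) carrier_vecD by (auto simp: cinner_def sum_distrib_left intro!: sum.cong)
  finally show ?thesis .
qed

lemma eigen_shift_mult_member:
  assumes "\<And>i. i < k \<Longrightarrow> us i \<in> carrier_vec n" "orthonormal k us" "l < k"
  shows "eigen_shift n us lam k c *\<^sub>v us l = of_real (c - lam l) \<cdot>\<^sub>v us l"
proof (rule eq_vecI)
  fix a assume "a < dim_vec (of_real (c - lam l) \<cdot>\<^sub>v us l)"
  moreover have dim_l: "dim_vec (us l) = n" using assms(1)[OF assms(3)] by auto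
  ultimately have a: "a < n" by simp
  have "(eigen_shift n us lam k c *\<^sub>v us l) $ a
      = (\<Sum>i<k. of_real (c - lam i) * us i $ a * (if i = l then 1 else 0))"
    using index_eigen_shift_mult_vec[OF assms(1) _ a] assms unfolding orthonormal_def
    by (auto intro!: sum.cong)
  then show "(eigen_shift n us lam k c *\<^sub>v us l) $ a = (of_real (c - lam l) \<cdot>\<^sub>v us l) $ a"
    using assms(3) a dim_l by (simp add: if_distrib sum.delta' cong: if_cong)
qed (use assms(1)[OF assms(3)] in \<open>auto simp: eigen_shift_def\<close>)

lemma eigen_shift_mult_orthogonal:
  assumes "\<And>i. i < k \<Longrightarrow> us i \<in> carrier_vec n" "y \<in> carrier_vec n" "\<And>i. i < k \<Longrightarrow> cinner (us i) y = 0"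
  shows "eigen_shift n us lam k c *\<^sub>v y = 0\<^sub>v n"
  by (rule eq_vecI) (use index_eigen_shift_mult_vec[OF assms(1,2)] assms in \<open>auto simp: eigen_shift_def\<close>)

lemma trace_eigen_shift:
  assumes "\<And>i. i < k \<Longrightarrow> us i \<in> carrier_vec n" "orthonormal k us"
  shows "trace_mat (eigen_shift n us lam k c) = (\<Sum>i<k. of_real (c - lam i))"
proof -
  have "trace_mat (eigen_shift n us lam k c)
      = (\<Sum>i<k. of_real (c - lam i) * (\<Sum>a<n. cnj (us i $ a) * us i $ a))"
    unfolding trace_mat_def eigen_shift_def
    by (simp add: sum.swap[of _ "{..<n}"] sum_distrib_left mult_ac)
  also have "\<dots> = (\<Sum>i<k. of_real (c - lam i))"
  proof (rule sum.cong[OF refl])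
    fix i assume "i \<in> {..<k}"
    then have "cinner (us i) (us i) = 1" "dim_vec (us i) = n"
      using assms unfolding orthonormal_def by auto
    then show "of_real (c - lam i) * (\<Sum>a<n. cnj (us i $ a) * us i $ a) = of_real (c - lam i)"
      unfolding cinner_def by simp
  qed
  finally show ?thesis .
qed

lemma trace_eigen_shift_neq:
  fixes lam :: "nat \<Rightarrow> real"
  assumes A: "A \<in> carrier_mat n n" and k: "k < n"
    and us: "\<And>i. i < k \<Longrightarrow> us i \<in> carrier_vec n" and on: "orthonormal k us"
  defines "c \<equiv> (Re (trace_mat A) - (\<Sum>i<k. lam i)) / real (n - k) + 1"
  shows "trace_mat (A + eigen_shift n us lam k c) \<noteq> of_nat n * of_real c"
proof
  assume "trace_mat (A + eigen_shift n us lam k c) = of_nat n * of_real c"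
  moreover have "trace_mat (A + eigen_shift n us lam k c) = trace_mat A + (\<Sum>i<k. of_real (c - lam i))"
    using trace_mat_add[OF A eigen_shift_carrier] trace_eigen_shift[OF us on] by simp
  ultimately have "Re (trace_mat A + (\<Sum>i<k. of_real (c - lam i))) = Re (of_nat n * of_real c)"
    by simp
  then have "Re (trace_mat A) + (\<Sum>i<k. (c - lam i)) = real n * c"
    by (simp add: Re_sum)
  then have "Re (trace_mat A) + real k * c - (\<Sum>i<k. lam i) = real n * c"
    by (simp add: sum_subtractf)
  moreover have "real (n - k) * c = Re (trace_mat A) - (\<Sum>i<k. lam i) + real (n - k)"
    unfolding c_def using k by (simp add: field_simps)
  ultimately show False using k by (simp add: of_nat_diff algebra_simps)
qed

lemma exists_eigenvector_orthogonal:
  assumes A: "hermitian n A" and k: "k < n"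
    and us: "\<And>i. i < k \<Longrightarrow> us i \<in> carrier_vec n"
    and eig: "\<And>i. i < k \<Longrightarrow> A *\<^sub>v us i = of_real (lam i) \<cdot>\<^sub>v us i"
    and on: "orthonormal k us"
  shows "\<exists>x e. x \<in> carrier_vec n \<and> x \<noteq> 0\<^sub>v n \<and> A *\<^sub>v x = of_real e \<cdot>\<^sub>v x
               \<and> (\<forall>i<k. cinner (us i) x = 0)"
proof -
  \<comment> \<open>Move the known eigenvalues to a value c that the trace of A forbids as the only eigenvalue.\<close>
  define c where "c = (Re (trace_mat A) - (\<Sum>i<k. lam i)) / real (n - k) + 1"
  define B where "B = A + eigen_shift n us lam k c"
  have Ac: "A \<in> carrier_mat n n" by (rule hermitian_carrier[OF A])
  have Bc: "B \<in> carrier_mat n n" unfolding B_def using Ac eigen_shift_carrier by auto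
  have Bh: "hermitian n B" unfolding B_def by (rule hermitian_add[OF A hermitian_eigen_shift])
  have Bx: "B *\<^sub>v x = A *\<^sub>v x + eigen_shift n us lam k c *\<^sub>v x" if "x \<in> carrier_vec n" for x
    unfolding B_def by (rule add_mult_distrib_mat_vec[OF Ac eigen_shift_carrier that])
  have Bu: "B *\<^sub>v us l = of_real c \<cdot>\<^sub>v us l" if l: "l < k" for l
    using Bx[OF us[OF l]] eig[OF l] eigen_shift_mult_member[OF us on l]
    by (auto simp: algebra_simps add_smult_distrib_vec[symmetric])
  have "trace_mat B \<noteq> of_nat n * of_real c"
    unfolding B_def c_def by (rule trace_eigen_shift_neq[OF Ac k us on])
  then obtain e x where e: "e \<noteq> of_real c" and x: "x \<in> carrier_vec n" "x \<noteq> 0\<^sub>v n" "B *\<^sub>v x = e \<cdot>\<^sub>v x"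
    using exists_eigenvalue_neq[OF Bc] Bc unfolding eigenvalue_def eigenvector_def by blast
  have orth: "cinner (us l) x = 0" if l: "l < k" for l
  proof -
    have "e * cinner (us l) x = cinner (B *\<^sub>v us l) x"
      using x us[OF l] cinner_mat_adjoint[OF Bc us[OF l] x(1)]
      by (simp add: mat_adjoint_hermitian[OF Bh] cinner_smult_right)
    also have "\<dots> = of_real c * cinner (us l) x" unfolding Bu[OF l] cinner_smult_left by simp
    finally show ?thesis using e by simp
  qed
  have "A *\<^sub>v x = e \<cdot>\<^sub>v x"
    using Bx[OF x(1)] x(3) eigen_shift_mult_orthogonal[OF us x(1) orth] Ac x(1) by simp
  then have "A *\<^sub>v x = of_real (Re e) \<cdot>\<^sub>v x" using hermitian_eigenvalue_real[OF Bh x] by metis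
  then show ?thesis using x orth by blast
qed

lemma orthonormal_eigenvector_extend:
  assumes A: "hermitian n A" and k: "k < n"
    and us: "\<And>i. i < k \<Longrightarrow> us i \<in> carrier_vec n"
    and eig: "\<And>i. i < k \<Longrightarrow> A *\<^sub>v us i = of_real (lam i) \<cdot>\<^sub>v us i"
    and on: "orthonormal k us"
  shows "\<exists>y e. y \<in> carrier_vec n \<and> A *\<^sub>v y = of_real e \<cdot>\<^sub>v y \<and> cinner y y = 1
               \<and> (\<forall>i<k. cinner (us i) y = 0)"
proof -
  obtain x e where x: "x \<in> carrier_vec n" "x \<noteq> 0\<^sub>v n" "A *\<^sub>v x = of_real e \<cdot>\<^sub>v x"
    and orth: "\<forall>i<k. cinner (us i) x = 0"
    using exists_eigenvector_orthogonal[OF A k us eig on] by blast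
  define y where "y = of_real (1 / sqrt (sqnorm x)) \<cdot>\<^sub>v x"
  have "A *\<^sub>v y = of_real (1 / sqrt (sqnorm x)) \<cdot>\<^sub>v (of_real e \<cdot>\<^sub>v x)"
    unfolding y_def using mult_mat_vec[OF hermitian_carrier[OF A] x(1)] x(3) by simp
  also have "\<dots> = of_real e \<cdot>\<^sub>v y" unfolding y_def by (simp add: smult_smult_assoc mult.commute)
  finally have "A *\<^sub>v y = of_real e \<cdot>\<^sub>v y" .
  moreover have "cinner y y = 1" unfolding y_def by (rule cinner_normalize[OF x(1,2)])
  moreover have "\<forall>i<k. cinner (us i) y = 0"
    unfolding y_def using orth us x(1) by (simp add: cinner_smult_right)
  moreover have "y \<in> carrier_vec n" unfolding y_def using x(1) by simp
  ultimately show ?thesis by blast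
qed

lemma orthonormal_eigenvectors:
  assumes A: "hermitian n A" and "k \<le> n"
  shows "\<exists>us lam. (\<forall>i<k. us i \<in> carrier_vec n \<and> A *\<^sub>v us i = of_real (lam i) \<cdot>\<^sub>v us i)
                  \<and> orthonormal k us"
  using \<open>k \<le> n\<close>
proof (induction k)
  case (Suc k)
  then obtain us lam where us: "\<forall>i<k. us i \<in> carrier_vec n \<and> A *\<^sub>v us i = of_real (lam i) \<cdot>\<^sub>v us i"
    and on: "orthonormal k us" by auto
  obtain y e where y: "y \<in> carrier_vec n" "A *\<^sub>v y = of_real e \<cdot>\<^sub>v y" "cinner y y = 1"
    and orth: "\<forall>i<k. cinner (us i) y = 0"
    using orthonormal_eigenvector_extend[OF A _ _ _ on, of lam] us Suc.prems by auto
  have orth': "cinner y (us i) = 0" if "i < k" for i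
    using cinner_cnj_commute[of y "us i"] orth y(1) us that by auto
  have "orthonormal (Suc k) (us(k := y))"
    using on y(3) orth orth' unfolding orthonormal_def by (auto simp: less_Suc_eq)
  moreover have "\<forall>i<Suc k. (us(k := y)) i \<in> carrier_vec n
      \<and> A *\<^sub>v (us(k := y)) i = of_real ((lam(k := e)) i) \<cdot>\<^sub>v (us(k := y)) i"
    using us y by (auto simp: less_Suc_eq)
  ultimately show ?case by blast
qed (simp add: orthonormal_def)

theorem hermitian_unitary_diagonalizable:
  assumes A: "hermitian n A"
  shows "\<exists>U lam. unitary n U \<and> A = U * mat_diag n (\<lambda>i. complex_of_real (lam i)) * mat_adjoint U"
proof -
  obtain us lam where us: "\<forall>i<n. us i \<in> carrier_vec n \<and> A *\<^sub>v us i = of_real (lam i) \<cdot>\<^sub>v us i"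
    and on: "orthonormal n us"
    using orthonormal_eigenvectors[OF A, of n] by auto
  have Ac: "A \<in> carrier_mat n n" by (rule hermitian_carrier[OF A])
  define U where "U = mat n n (\<lambda>(a,i). us i $ a)"
  have Uc: "U \<in> carrier_mat n n" unfolding U_def by auto
  have col_U: "col U i = us i" if "i < n" for i
    unfolding U_def using that us by (auto intro!: eq_vecI)
  have UU: "mat_adjoint U * U = 1\<^sub>m n"
  proof (rule eq_matI)
    fix i j assume "i < dim_row (1\<^sub>m n)" "j < dim_col (1\<^sub>m n)"
    then have i: "i < n" and j: "j < n" by auto
    have "(mat_adjoint U * U) $$ (i,j) = cinner (us i) (us j)"
      unfolding cinner_def U_def using i j us by (auto simp: scalar_prod_def atLeast0LessThan intro!: sum.cong)
    then show "(mat_adjoint U * U) $$ (i,j) = 1\<^sub>m n $$ (i,j)"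
      using on i j unfolding orthonormal_def by simp
  qed (use Uc in auto)
  have UU': "U * mat_adjoint U = 1\<^sub>m n"
    by (rule mat_mult_left_right_inverse[OF _ Uc UU]) (use Uc in auto)
  define D where "D = mat_diag n (\<lambda>i. complex_of_real (lam i))"
  have AU: "A * U = U * D"
  proof (rule eq_matI)
    fix a i assume "a < dim_row (U * D)" "i < dim_col (U * D)"
    then have a: "a < n" and i: "i < n" using Uc unfolding D_def by auto
    have "(A * U) $$ (a,i) = (A *\<^sub>v us i) $ a"
      using Ac Uc a i col_U[OF i] by simp
    also have "\<dots> = U $$ (a,i) * of_real (lam i)"
      using us i a unfolding U_def by auto
    also have "\<dots> = (U * D) $$ (a,i)"
      unfolding D_def mat_diag_mult_right[OF Uc] using a i by simp
    finally show "(A * U) $$ (a,i) = (U * D) $$ (a,i)" .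
  qed (use Uc Ac in \<open>auto simp: D_def\<close>)
  have "A = (A * U) * mat_adjoint U"
    using Ac Uc UU' by (simp add: assoc_mult_mat[of A n n U n "mat_adjoint U" n])
  then show ?thesis unfolding AU D_def unitary_def using Uc UU UU' by blast
qed

section \<open>Quadratic forms and rank-one updates\<close>

definition eigen_weight :: "complex mat \<Rightarrow> complex vec \<Rightarrow> nat \<Rightarrow> real" where
  "eigen_weight U w i = (cmod ((mat_adjoint U *\<^sub>v w) $ i))\<^sup>2"

lemma index_mat_adjoint_mult_vec:
  assumes "U \<in> carrier_mat n n" "y \<in> carrier_vec n" "i < n"
  shows "(mat_adjoint U *\<^sub>v y) $ i = cinner (col U i) y"
  unfolding cinner_def using assms index_mult_mat_vec_sum[of "mat_adjoint U" n y i] by auto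

lemma cinner_unitary_diag:
  assumes U: "unitary n U" and v: "v \<in> carrier_vec n"
  shows "cinner v ((U * mat_diag n f * mat_adjoint U) *\<^sub>v v) = (\<Sum>i<n. f i * of_real (eigen_weight U v i))"
proof -
  have Uc: "U \<in> carrier_mat n n" and aU: "mat_adjoint U \<in> carrier_mat n n" using unitaryD[OF U] by auto
  define w where "w = mat_adjoint U *\<^sub>v v"
  have wc: "w \<in> carrier_vec n" unfolding w_def using aU v by auto
  have "(U * mat_diag n f * mat_adjoint U) *\<^sub>v v = (U * mat_diag n f) *\<^sub>v w"
    unfolding w_def by (rule assoc_mult_mat_vec) (use Uc aU v in auto)
  also have "\<dots> = U *\<^sub>v (mat_diag n f *\<^sub>v w)"
    by (rule assoc_mult_mat_vec) (use Uc wc in auto)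
  finally have "cinner v ((U * mat_diag n f * mat_adjoint U) *\<^sub>v v) = cinner w (mat_diag n f *\<^sub>v w)"
    using cinner_mat_adjoint[OF Uc v mult_mat_vec_carrier[OF mat_diag_dim wc]] unfolding w_def
    by simp
  also have "\<dots> = (\<Sum>i<n. cnj (w$i) * (f i * w$i))"
    unfolding cinner_def using wc index_mult_mat_diag_vec[OF wc] by (auto intro!: sum.cong)
  also have "\<dots> = (\<Sum>i<n. f i * of_real (eigen_weight U v i))"
    unfolding eigen_weight_def w_def
    by (rule sum.cong[OF refl]) (metis complex_norm_square of_real_power mult.commute mult.left_commute)
  finally show ?thesis .
qed

lemma Re_cinner_unitary_diag:
  assumes "unitary n U" "v \<in> carrier_vec n"
  shows "Re (cinner v ((U * mat_diag n (\<lambda>i. of_real (f i)) * mat_adjoint U) *\<^sub>v v))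
         = (\<Sum>i<n. f i * eigen_weight U v i)"
  unfolding cinner_unitary_diag[OF assms] Re_sum by simp

lemma sum_eigen_weight:
  assumes U: "unitary n U" and v: "v \<in> carrier_vec n"
  shows "(\<Sum>i<n. eigen_weight U v i) = sqnorm v"
proof -
  have "cinner v ((U * mat_diag n (\<lambda>i. 1) * mat_adjoint U) *\<^sub>v v) = cinner v v"
    using unitaryD[OF U] v by simp
  then have "(\<Sum>i<n. of_real (eigen_weight U v i)) = (of_real (sqnorm v) :: complex)"
    unfolding cinner_unitary_diag[OF U v] cinner_self by simp
  then show ?thesis by (metis of_real_eq_iff of_real_sum)
qed

lemma sqnorm_col_unitary:
  assumes "unitary n V" "i < n"
  shows "sqnorm (col V i) = 1"
proof -
  have Vc: "V \<in> carrier_mat n n" by (rule unitaryD(1)[OF assms(1)])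
  have "of_real (sqnorm (col V i)) = (\<Sum>a<n. cnj (V$$(a,i)) * V$$(a,i))"
    unfolding cinner_self[symmetric] cinner_def using Vc assms(2) by simp
  also have "\<dots> = 1" using unitary_orthonormal_cols[OF assms(1) assms(2) assms(2)] by simp
  finally show ?thesis by simp
qed

lemma Re_cinner_col_unitary_diag:
  assumes V: "unitary n V" and i: "i < n"
  shows "Re (cinner (col V i) ((V * mat_diag n (\<lambda>l. of_real (nu l)) * mat_adjoint V) *\<^sub>v col V i)) = nu i"
proof -
  note Vu = unitaryD[OF V]
  have w: "eigen_weight V (col V i) l = (if l = i then 1 else 0)" if l: "l < n" for l
  proof -
    have "(mat_adjoint V *\<^sub>v col V i) $ l = (mat_adjoint V * V) $$ (l,i)" using Vu(1) l i by simp
    then show ?thesis unfolding eigen_weight_def using Vu(2) l i by simp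
  qed
  have "Re (cinner (col V i) ((V * mat_diag n (\<lambda>l. of_real (nu l)) * mat_adjoint V) *\<^sub>v col V i))
      = (\<Sum>l<n. nu l * eigen_weight V (col V i) l)"
    by (rule Re_cinner_unitary_diag[OF V]) (use Vu(1) i in auto)
  also have "\<dots> = nu i" using i by (simp add: w if_distrib sum.delta' cong: if_cong)
  finally show ?thesis .
qed

lemma outer_carrier[simp]: "dim_vec w = n \<Longrightarrow> outer w \<in> carrier_mat n n"
  unfolding outer_def by auto

lemma hermitian_outer: "dim_vec w = n \<Longrightarrow> hermitian n (outer w)"
  unfolding hermitian_def outer_def by auto

lemma cinner_outer:
  assumes "w \<in> carrier_vec n" "x \<in> carrier_vec n"
  shows "cinner x (outer w *\<^sub>v x) = of_real ((cmod (cinner w x))\<^sup>2)"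
proof -
  have "(outer w *\<^sub>v x) $ a = w $ a * cinner w x" if "a < n" for a
    using index_mult_mat_vec_sum[of "outer w" n x a] assms that
    by (simp add: outer_def cinner_def sum_distrib_left mult.assoc)
  then have "cinner x (outer w *\<^sub>v x) = cinner x w * cinner w x"
    using assms by (simp add: cinner_def sum_distrib_right mult.assoc)
  also have "cinner x w = cnj (cinner w x)" by (rule cinner_cnj_commute) (use assms in auto)
  finally show ?thesis by (metis complex_norm_square of_real_power mult.commute)
qed

lemma msum_carrier: "(\<And>k. k < m \<Longrightarrow> f k \<in> carrier_mat d d) \<Longrightarrow> msum d f m \<in> carrier_mat d d"
  by (induction m) auto

lemma cinner_msum:
  assumes "\<And>k. k < m \<Longrightarrow> f k \<in> carrier_mat d d" "x \<in> carrier_vec d"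
  shows "cinner x (msum d f m *\<^sub>v x) = (\<Sum>k<m. cinner x (f k *\<^sub>v x))"
  using assms(1)
proof (induction m)
  case 0
  then show ?case using assms(2) by (simp add: cinner_def)
next
  case (Suc m)
  have c: "msum d f m \<in> carrier_mat d d" "f m \<in> carrier_mat d d" using Suc msum_carrier by auto
  have "msum d f (Suc m) *\<^sub>v x = msum d f m *\<^sub>v x + f m *\<^sub>v x"
    using add_mult_distrib_mat_vec[OF c assms(2)] by simp
  then have "cinner x (msum d f (Suc m) *\<^sub>v x) = cinner x (msum d f m *\<^sub>v x) + cinner x (f m *\<^sub>v x)"
    using c assms(2) by (simp add: cinner_add_right)
  then show ?case using Suc by simp
qed

lemma sum_eigen_weight_msum_outer:
  assumes U: "unitary n U" and f: "\<And>k. k < N \<Longrightarrow> f k \<in> carrier_vec n" and i: "i < n"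
  shows "(\<Sum>k<N. eigen_weight U (f k) i) = Re (cinner (col U i) (msum n (\<lambda>k. outer (f k)) N *\<^sub>v col U i))"
proof -
  have Uc: "U \<in> carrier_mat n n" by (rule unitaryD(1)[OF U])
  have x: "col U i \<in> carrier_vec n" using Uc i by auto
  have "eigen_weight U (f k) i = Re (cinner (col U i) (outer (f k) *\<^sub>v col U i))" if k: "k < N" for k
  proof -
    have "(mat_adjoint U *\<^sub>v f k) $ i = cnj (cinner (f k) (col U i))"
      using index_mat_adjoint_mult_vec[OF Uc f[OF k] i] cinner_cnj_commute[of "col U i" "f k"] f[OF k] Uc
      by simp
    then show ?thesis unfolding eigen_weight_def cinner_outer[OF f[OF k] x] by simp
  qed
  then have "(\<Sum>k<N. eigen_weight U (f k) i) = Re (\<Sum>k<N. cinner (col U i) (outer (f k) *\<^sub>v col U i))"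
    by (simp add: Re_sum)
  also have "(\<Sum>k<N. cinner (col U i) (outer (f k) *\<^sub>v col U i)) = cinner (col U i) (msum n (\<lambda>k. outer (f k)) N *\<^sub>v col U i)"
    by (rule cinner_msum[symmetric]) (use f x in auto)
  finally show ?thesis .
qed

lemma index_msum_outer:
  assumes "\<And>k. k < m \<Longrightarrow> dim_vec (v k) = d" "a < d" "b < d"
  shows "msum d (\<lambda>i. outer (v i)) m $$ (a,b) = (\<Sum>k<m. v k $ a * cnj (v k $ b))"
  using assms(1)
proof (induction m)
  case (Suc m)
  have "msum d (\<lambda>i. outer (v i)) m \<in> carrier_mat d d" by (rule msum_carrier) (use Suc in auto)
  then show ?case using Suc assms(2,3) by (simp add: outer_def)
qed (use assms in simp)

lemma Cauchy_Schwarz_real_sum: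
  fixes a b :: "'a \<Rightarrow> real"
  shows "(\<Sum>i\<in>I. a i * b i)\<^sup>2 \<le> (\<Sum>i\<in>I. (a i)\<^sup>2) * (\<Sum>i\<in>I. (b i)\<^sup>2)"
proof -
  have "0 \<le> (\<Sum>i\<in>I. \<Sum>j\<in>I. (a i * b j - a j * b i)\<^sup>2)"
    by (intro sum_nonneg) auto
  also have "\<dots> = (\<Sum>i\<in>I. \<Sum>j\<in>I. (a i)\<^sup>2 * (b j)\<^sup>2) + (\<Sum>i\<in>I. \<Sum>j\<in>I. (a j)\<^sup>2 * (b i)\<^sup>2)
                   - 2 * (\<Sum>i\<in>I. \<Sum>j\<in>I. (a i * b i) * (a j * b j))"
    by (simp add: power2_eq_square algebra_simps sum.distrib sum_subtractf sum_distrib_left)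
  also have "(\<Sum>i\<in>I. \<Sum>j\<in>I. (a i)\<^sup>2 * (b j)\<^sup>2) = (\<Sum>i\<in>I. (a i)\<^sup>2) * (\<Sum>i\<in>I. (b i)\<^sup>2)"
    by (simp add: sum_product)
  also have "(\<Sum>i\<in>I. \<Sum>j\<in>I. (a j)\<^sup>2 * (b i)\<^sup>2) = (\<Sum>i\<in>I. (a i)\<^sup>2) * (\<Sum>i\<in>I. (b i)\<^sup>2)"
    by (subst sum.swap) (simp add: sum_product)
  also have "(\<Sum>i\<in>I. \<Sum>j\<in>I. (a i * b i) * (a j * b j)) = (\<Sum>i\<in>I. a i * b i)\<^sup>2"
    by (simp add: sum_product power2_eq_square)
  finally show ?thesis by simp
qed

lemma cmod_cinner_squared_le:
  assumes "dim_vec x = dim_vec y"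
  shows "(cmod (cinner x y))\<^sup>2 \<le> sqnorm x * sqnorm y"
proof -
  have "cmod (cinner x y) \<le> (\<Sum>a<dim_vec x. cmod (x$a) * cmod (y$a))"
    unfolding cinner_def using norm_sum[of "\<lambda>a. cnj (x$a) * y$a"] by (simp add: norm_mult)
  then have "(cmod (cinner x y))\<^sup>2 \<le> (\<Sum>a<dim_vec x. cmod (x$a) * cmod (y$a))\<^sup>2"
    by (rule power_mono) simp
  also have "\<dots> \<le> sqnorm x * sqnorm y"
    unfolding sqnorm_def assms[symmetric] by (rule Cauchy_Schwarz_real_sum)
  finally show ?thesis .
qed

lemma det_one_minus_mult_commute:
  fixes A B :: "'a :: idom mat"
  assumes A: "A \<in> carrier_mat n m" and B: "B \<in> carrier_mat m n"
  shows "det (1\<^sub>m n - A * B) = det (1\<^sub>m m - B * A)"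
proof -
  define M1 where "M1 = four_block_mat (1\<^sub>m n - A * B) A (0\<^sub>m m n) (1\<^sub>m m)"
  define M2 where "M2 = four_block_mat (1\<^sub>m n) (0\<^sub>m n m) B (1\<^sub>m m)"
  define M3 where "M3 = four_block_mat (1\<^sub>m n) A (0\<^sub>m m n) (1\<^sub>m m - B * A)"
  have AB: "1\<^sub>m n - A * B \<in> carrier_mat n n" and BA: "1\<^sub>m m - B * A \<in> carrier_mat m m"
    using A B by auto
  have c: "M1 \<in> carrier_mat (n+m) (n+m)" "M2 \<in> carrier_mat (n+m) (n+m)" "M3 \<in> carrier_mat (n+m) (n+m)"
    unfolding M1_def M2_def M3_def using A B by auto
  have "M1 * M2 = four_block_mat ((1\<^sub>m n - A * B) * 1\<^sub>m n + A * B) ((1\<^sub>m n - A * B) * 0\<^sub>m n m + A * 1\<^sub>m m)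
      (0\<^sub>m m n * 1\<^sub>m n + 1\<^sub>m m * B) (0\<^sub>m m n * 0\<^sub>m n m + 1\<^sub>m m * 1\<^sub>m m)"
    unfolding M1_def M2_def by (rule mult_four_block_mat) (use A B in auto)
  also have "\<dots> = four_block_mat (1\<^sub>m n) A B (1\<^sub>m m)"
    using A B by (intro arg_cong4[where f = four_block_mat] eq_matI) auto
  also have "\<dots> = four_block_mat (1\<^sub>m n * 1\<^sub>m n + 0\<^sub>m n m * 0\<^sub>m m n) (1\<^sub>m n * A + 0\<^sub>m n m * (1\<^sub>m m - B * A))
      (B * 1\<^sub>m n + 1\<^sub>m m * 0\<^sub>m m n) (B * A + 1\<^sub>m m * (1\<^sub>m m - B * A))"
    using A B by (intro arg_cong4[where f = four_block_mat] eq_matI) auto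
  also have "\<dots> = M2 * M3"
    unfolding M2_def M3_def by (rule mult_four_block_mat[symmetric]) (use A B in auto)
  finally have "M1 * M2 = M2 * M3" .
  moreover have "det M1 = det (1\<^sub>m n - A * B)"
    unfolding M1_def using det_four_block_mat_lower_left_zero[of "1\<^sub>m n - A * B" n A m "0\<^sub>m m n" "1\<^sub>m m"] A AB
    by simp
  moreover have "det M2 = 1"
    unfolding M2_def using det_four_block_mat_upper_right_zero[of "1\<^sub>m n" n _ m B] B by simp
  moreover have "det M3 = det (1\<^sub>m m - B * A)"
    unfolding M3_def using det_four_block_mat_lower_left_zero[of "1\<^sub>m n" n A m _ "1\<^sub>m m - B * A"] A BA
    by simp
  ultimately show ?thesis using det_mult[OF c(1,2)] det_mult[OF c(2,3)] by simp
qed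

lemma det_minus_outer:
  assumes Q: "Q \<in> carrier_mat n n" and R: "R \<in> carrier_mat n n" and QR: "Q * R = 1\<^sub>m n"
    and w: "w \<in> carrier_vec n"
  shows "det (Q - outer w) = det Q * (1 - cinner w (R *\<^sub>v w))"
proof -
  define z where "z = R *\<^sub>v w"
  have z: "z \<in> carrier_vec n" "Q *\<^sub>v z = w"
    unfolding z_def using R w assoc_mult_mat_vec[OF Q R w, symmetric] QR by auto
  define a where "a = mat n 1 (\<lambda>(i,_). z $ i)"
  define b where "b = mat 1 n (\<lambda>(_,j). cnj (w $ j))"
  have ab: "a \<in> carrier_mat n 1" "b \<in> carrier_mat 1 n" unfolding a_def b_def by auto
  have "Q * (a * b) = outer w"
  proof (rule eq_matI)
    fix i j assume "i < dim_row (outer w)" "j < dim_col (outer w)"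
    then have i: "i < n" and j: "j < n" using w unfolding outer_def by auto
    have "(Q * (a * b)) $$ (i,j) = (\<Sum>k<n. Q$$(i,k) * z$k) * cnj (w $ j)"
      using Q i j unfolding a_def b_def
      by (auto simp: scalar_prod_def atLeast0LessThan sum_distrib_right mult.assoc intro!: sum.cong)
    also have "(\<Sum>k<n. Q$$(i,k) * z$k) = w $ i" using index_mult_mat_vec_sum[OF Q z(1) i] z(2) by simp
    finally show "(Q * (a * b)) $$ (i,j) = outer w $$ (i,j)" unfolding outer_def using i j w by simp
  qed (use Q w ab in \<open>auto simp: outer_def\<close>)
  moreover have "Q * (1\<^sub>m n - a * b) = Q * 1\<^sub>m n - Q * (a * b)"
    by (rule mult_minus_distrib_mat) (use Q ab in auto)
  ultimately have factor: "Q - outer w = Q * (1\<^sub>m n - a * b)" using Q by simp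
  have "1\<^sub>m n - a * b \<in> carrier_mat n n" using ab by auto
  then have "det (Q - outer w) = det Q * det (1\<^sub>m 1 - b * a)"
    unfolding factor using det_mult[OF Q] det_one_minus_mult_commute[OF ab] by simp
  also have "det (1\<^sub>m 1 - b * a) = (1\<^sub>m 1 - b * a) $$ (0,0)"
    by (rule det_single) (use ab in auto)
  also have "\<dots> = 1 - cinner w z"
    using w by (simp add: cinner_def a_def b_def scalar_prod_def atLeast0LessThan)
  finally show ?thesis unfolding z_def .
qed

section \<open>The potential\<close>

lemma resolvent_unitary_diag:
  assumes U: "unitary n U" and ne: "\<And>i. i < n \<Longrightarrow> lam i \<noteq> u"
  shows "of_real u \<cdot>\<^sub>m 1\<^sub>m n - U * mat_diag n (\<lambda>i. of_real (lam i)) * mat_adjoint U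
           = U * mat_diag n (\<lambda>i. of_real (u - lam i)) * mat_adjoint U"
    and "minv (of_real u \<cdot>\<^sub>m 1\<^sub>m n - U * mat_diag n (\<lambda>i. of_real (lam i)) * mat_adjoint U)
           = U * mat_diag n (\<lambda>i. of_real (1 / (u - lam i))) * mat_adjoint U"
proof -
  show diff: "of_real u \<cdot>\<^sub>m 1\<^sub>m n - U * mat_diag n (\<lambda>i. of_real (lam i)) * mat_adjoint U
           = U * mat_diag n (\<lambda>i. of_real (u - lam i)) * mat_adjoint U"
    using unitary_diag_diff[OF U] by simp
  have "minv (U * mat_diag n (\<lambda>i. of_real (u - lam i)) * mat_adjoint U)
      = U * mat_diag n (\<lambda>i. 1 / of_real (u - lam i)) * mat_adjoint U"
    by (rule minv_unitary_diag[OF U]) (use ne in auto)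
  then show "minv (of_real u \<cdot>\<^sub>m 1\<^sub>m n - U * mat_diag n (\<lambda>i. of_real (lam i)) * mat_adjoint U)
           = U * mat_diag n (\<lambda>i. of_real (1 / (u - lam i))) * mat_adjoint U"
    unfolding diff by simp
qed

lemma eigenvalue_le_lmax:
  assumes U: "unitary n U" and A: "A = U * mat_diag n (\<lambda>i. of_real (lam i)) * mat_adjoint U"
    and i: "i < n"
  shows "lam i \<le> lmax A"
proof -
  have "Re ` set_mset (eigs A) = lam ` {0..<n}"
    unfolding A eigs_unitary_diag[OF U] by (auto simp: image_image)
  then show ?thesis unfolding lmax_def using i by simp
qed

lemma Phi_unitary_diag:
  assumes U: "unitary n U" and lt: "\<And>i. i < n \<Longrightarrow> lam i < u"
  shows "Phi n u (U * mat_diag n (\<lambda>i. of_real (lam i)) * mat_adjoint U) = - (\<Sum>i<n. ln (u - lam i))"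
proof -
  have ne: "\<And>i. i < n \<Longrightarrow> lam i \<noteq> u" using lt by fastforce
  have "Phi n u (U * mat_diag n (\<lambda>i. of_real (lam i)) * mat_adjoint U)
      = trlog (U * mat_diag n (\<lambda>i. of_real (1 / (u - lam i))) * mat_adjoint U)"
    unfolding Phi_def by (rule arg_cong[where f = trlog], rule resolvent_unitary_diag(2)[OF U ne])
  also have "\<dots> = (\<Sum>i<n. - ln (u - lam i))"
    unfolding trlog_unitary_diag[OF U] Re_complex_of_real
    by (rule sum.cong[OF refl]) (use lt in \<open>auto simp: ln_div\<close>)
  finally show ?thesis by (simp add: sum_negf)
qed

lemma eigenvalue_rank_one_update_le:
  assumes U: "unitary n U" and V: "unitary n V" and w: "w \<in> carrier_vec n"
    and A: "A = U * mat_diag n (\<lambda>i. of_real (lam i)) * mat_adjoint U"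
    and AV: "A + outer w = V * mat_diag n (\<lambda>i. of_real (nu i)) * mat_adjoint V"
    and le: "\<And>i. i < n \<Longrightarrow> lam i \<le> l" and i: "i < n"
  shows "nu i \<le> l + sqnorm w"
proof -
  define x where "x = col V i"
  have x: "x \<in> carrier_vec n" "sqnorm x = 1"
    unfolding x_def using unitaryD(1)[OF V] i sqnorm_col_unitary[OF V i] by auto
  have Ac: "A \<in> carrier_mat n n" unfolding A using unitaryD(1)[OF U] by auto
  have "nu i = Re (cinner x ((A + outer w) *\<^sub>v x))"
    unfolding x_def AV by (rule Re_cinner_col_unitary_diag[OF V i, symmetric])
  also have "cinner x ((A + outer w) *\<^sub>v x) = cinner x (A *\<^sub>v x) + cinner x (outer w *\<^sub>v x)"
    using Ac w x by (simp add: add_mult_distrib_mat_vec, intro cinner_add_right) (auto simp: outer_def)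
  also have "Re (cinner x (A *\<^sub>v x) + cinner x (outer w *\<^sub>v x))
      = Re (cinner x (A *\<^sub>v x)) + (cmod (cinner w x))\<^sup>2"
    using cinner_outer[OF w x(1)] by simp
  also have "Re (cinner x (A *\<^sub>v x)) = (\<Sum>j<n. lam j * eigen_weight U x j)"
    unfolding A by (rule Re_cinner_unitary_diag[OF U x(1)])
  also have "\<dots> \<le> (\<Sum>j<n. l * eigen_weight U x j)"
    by (rule sum_mono) (use le in \<open>auto intro: mult_right_mono simp: eigen_weight_def\<close>)
  also have "\<dots> = l" using sum_eigen_weight[OF U x(1)] x(2) by (simp flip: sum_distrib_left)
  also have "(cmod (cinner w x))\<^sup>2 \<le> sqnorm w"
    using cmod_cinner_squared_le[of w x] w x by simp
  finally show ?thesis by simp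
qed

lemma det_rank_one_update_unitary_diag:
  assumes U: "unitary n U" and A: "A = U * mat_diag n (\<lambda>i. of_real (lam i)) * mat_adjoint U"
    and w: "w \<in> carrier_vec n" and ne: "\<And>i. i < n \<Longrightarrow> lam i \<noteq> u"
  shows "det (of_real u \<cdot>\<^sub>m 1\<^sub>m n - (A + outer w))
         = of_real ((\<Prod>i<n. u - lam i) * (1 - (\<Sum>i<n. eigen_weight U w i / (u - lam i))))"
proof -
  have Ac: "A \<in> carrier_mat n n" unfolding A using unitaryD(1)[OF U] by auto
  have ne': "complex_of_real u - complex_of_real (lam i) \<noteq> 0" if "i < n" for i
    using ne[OF that] by (metis of_real_diff of_real_eq_0_iff right_minus_eq)
  define Q where "Q = of_real u \<cdot>\<^sub>m 1\<^sub>m n - A"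
  define R where "R = U * mat_diag n (\<lambda>i. 1 / (of_real u - of_real (lam i))) * mat_adjoint U"
  have Q: "Q = U * mat_diag n (\<lambda>i. of_real u - of_real (lam i)) * mat_adjoint U"
    unfolding Q_def A by (rule unitary_diag_diff[OF U])
  have "mat_diag n (\<lambda>i. (complex_of_real u - of_real (lam i)) * (1 / (of_real u - of_real (lam i))))
      = 1\<^sub>m n"
    by (rule eq_matI) (use ne' in auto)
  then have QR: "Q * R = 1\<^sub>m n"
    unfolding Q R_def unitary_diag_mult[OF U] using unitaryD[OF U] by simp
  have "of_real u \<cdot>\<^sub>m 1\<^sub>m n - (A + outer w) = Q - outer w"
    unfolding Q_def by (rule eq_matI) (use Ac w in \<open>auto simp: outer_def\<close>)
  also have "det (Q - outer w) = det Q * (1 - cinner w (R *\<^sub>v w))"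
    by (rule det_minus_outer[OF _ _ QR w]) (use Ac unitaryD(1)[OF U] in \<open>auto simp: Q_def R_def\<close>)
  also have "det Q = of_real (\<Prod>i<n. u - lam i)"
    unfolding Q det_unitary_diag[OF U] by simp
  also have "cinner w (R *\<^sub>v w) = of_real (\<Sum>i<n. eigen_weight U w i / (u - lam i))"
    unfolding R_def cinner_unitary_diag[OF U w] of_real_sum by (rule sum.cong) auto
  finally show ?thesis by simp
qed

lemma Phi_rank_one_update:
  assumes U: "unitary n U" and A: "A = U * mat_diag n (\<lambda>i. of_real (lam i)) * mat_adjoint U"
    and w: "w \<in> carrier_vec n" and le: "\<And>i. i < n \<Longrightarrow> lam i \<le> l" and gap: "l + sqnorm w < u"
  defines "x \<equiv> \<Sum>i<n. eigen_weight U w i / (u - lam i)"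
  shows "0 < 1 - x" and "Phi n u (A + outer w) = - (\<Sum>i<n. ln (u - lam i)) - ln (1 - x)"
proof -
  have lam_lt: "lam i < u" if "i < n" for i
    using le[OF that] gap sqnorm_nonneg[of w] by linarith
  have "hermitian n (A + outer w)"
    unfolding A using hermitian_add[OF hermitian_unitary_diag[OF U] hermitian_outer] w by auto
  then obtain V nu where V: "unitary n V"
    and AV: "A + outer w = V * mat_diag n (\<lambda>i. of_real (nu i)) * mat_adjoint V"
    using hermitian_unitary_diagonalizable by blast
  have nu_lt: "nu i < u" if "i < n" for i
    using eigenvalue_rank_one_update_le[OF U V w A AV le that] gap by linarith
  have "of_real (\<Prod>i<n. u - nu i) = det (of_real u \<cdot>\<^sub>m 1\<^sub>m n - (A + outer w))"
    unfolding AV unitary_diag_diff[OF V] det_unitary_diag[OF V] by simp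
  also have "\<dots> = of_real ((\<Prod>i<n. u - lam i) * (1 - x))"
    unfolding x_def by (rule det_rank_one_update_unitary_diag[OF U A w]) (use lam_lt in force)
  finally have prod_eq: "(\<Prod>i<n. u - nu i) = (\<Prod>i<n. u - lam i) * (1 - x)"
    by (rule of_real_eq_iff[THEN iffD1])
  have pos_nu: "(\<Prod>i<n. u - nu i) > 0" and pos_lam: "(\<Prod>i<n. u - lam i) > 0"
    using nu_lt lam_lt by (auto intro: prod_pos)
  then show x: "0 < 1 - x" using prod_eq by (simp add: zero_less_mult_iff)
  have "Phi n u (A + outer w) = - (\<Sum>i<n. ln (u - nu i))"
    unfolding AV by (rule Phi_unitary_diag[OF V nu_lt])
  also have "\<dots> = - ln (\<Prod>i<n. u - nu i)"
    by (subst ln_prod) (use nu_lt in force)+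
  also have "\<dots> = - (\<Sum>i<n. ln (u - lam i)) - ln (1 - x)"
    unfolding prod_eq using pos_lam x by (simp add: ln_mult, subst ln_prod) (use lam_lt in force)+
  finally show "Phi n u (A + outer w) = - (\<Sum>i<n. ln (u - lam i)) - ln (1 - x)" .
qed

lemma trlog_resolvent_mult:
  assumes U: "unitary n U" and A: "A = U * mat_diag n (\<lambda>i. of_real (lam i)) * mat_adjoint U"
    and lt: "\<And>i. i < n \<Longrightarrow> lam i < u" "\<And>i. i < n \<Longrightarrow> lam i < u'"
  shows "trlog (minv (of_real u \<cdot>\<^sub>m 1\<^sub>m n - A) * (of_real u' \<cdot>\<^sub>m 1\<^sub>m n - A))
         = (\<Sum>i<n. ln (u' - lam i) - ln (u - lam i))"
proof -
  have ne: "lam i \<noteq> u" and ne': "lam i \<noteq> u'" if "i < n" for i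
    using lt that by fastforce+
  have "minv (of_real u \<cdot>\<^sub>m 1\<^sub>m n - A) = U * mat_diag n (\<lambda>i. of_real (1 / (u - lam i))) * mat_adjoint U"
    unfolding A by (rule resolvent_unitary_diag(2)[OF U ne])
  moreover have "of_real u' \<cdot>\<^sub>m 1\<^sub>m n - A = U * mat_diag n (\<lambda>i. of_real (u' - lam i)) * mat_adjoint U"
    unfolding A by (rule resolvent_unitary_diag(1)[OF U ne'])
  ultimately have eq: "minv (of_real u \<cdot>\<^sub>m 1\<^sub>m n - A) * (of_real u' \<cdot>\<^sub>m 1\<^sub>m n - A)
      = U * mat_diag n (\<lambda>i. of_real (1 / (u - lam i) * (u' - lam i))) * mat_adjoint U"
    by (simp only: unitary_diag_mult[OF U] of_real_mult)
  show ?thesis unfolding eq trlog_unitary_diag[OF U] Re_complex_of_real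
    using lt by (intro sum.cong) (auto simp: ln_div)
qed

lemma trlog_one_minus_resolvent:
  assumes U: "unitary n U" and A: "A = U * mat_diag n (\<lambda>i. of_real (lam i)) * mat_adjoint U"
    and ne: "\<And>i. i < n \<Longrightarrow> lam i \<noteq> u"
  shows "trlog (1\<^sub>m n - of_real \<alpha> \<cdot>\<^sub>m minv (of_real u \<cdot>\<^sub>m 1\<^sub>m n - A))
         = (\<Sum>i<n. ln (1 - \<alpha> / (u - lam i)))"
proof -
  have "minv (of_real u \<cdot>\<^sub>m 1\<^sub>m n - A) = U * mat_diag n (\<lambda>i. of_real (1 / (u - lam i))) * mat_adjoint U"
    unfolding A by (rule resolvent_unitary_diag(2)[OF U ne])
  then have "1\<^sub>m n - of_real \<alpha> \<cdot>\<^sub>m minv (of_real u \<cdot>\<^sub>m 1\<^sub>m n - A)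
      = 1 \<cdot>\<^sub>m 1\<^sub>m n + (- of_real \<alpha>) \<cdot>\<^sub>m (U * mat_diag n (\<lambda>i. of_real (1 / (u - lam i))) * mat_adjoint U)"
    by (intro eq_matI) (use unitaryD(1)[OF U] in auto)
  also have "\<dots> = U * mat_diag n (\<lambda>i. of_real (1 - \<alpha> / (u - lam i))) * mat_adjoint U"
    unfolding unitary_diag_affine[OF U] by simp
  finally have eq: "1\<^sub>m n - of_real \<alpha> \<cdot>\<^sub>m minv (of_real u \<cdot>\<^sub>m 1\<^sub>m n - A)
      = U * mat_diag n (\<lambda>i. of_real (1 - \<alpha> / (u - lam i))) * mat_adjoint U" .
  show ?thesis unfolding eq trlog_unitary_diag[OF U] Re_complex_of_real ..
qed

section \<open>Summing the potential drop\<close>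

lemma weighted_ln_le_ln_weighted:
  fixes p y :: "'a \<Rightarrow> real"
  assumes "finite I" "\<And>i. i \<in> I \<Longrightarrow> p i \<ge> 0" "(\<Sum>i\<in>I. p i) = 1" "\<And>i. i \<in> I \<Longrightarrow> y i > 0"
  shows "(\<Sum>i\<in>I. p i * ln (y i)) \<le> ln (\<Sum>i\<in>I. p i * y i)"
proof -
  define Y where "Y = (\<Sum>i\<in>I. p i * y i)"
  obtain i0 where i0: "i0 \<in> I" "p i0 \<noteq> 0" using assms(3) by (metis sum.neutral zero_neq_one)
  have "p i0 * y i0 \<le> Y" unfolding Y_def
    by (rule member_le_sum) (use assms i0 in \<open>auto intro: mult_nonneg_nonneg less_imp_le\<close>)
  moreover have "p i0 * y i0 > 0" using assms i0 by (metis less_eq_real_def mult_pos_pos)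
  ultimately have Y: "Y > 0" by linarith
  \<comment> \<open>Tangent line of ln at Y: ln t \<le> ln Y + t / Y - 1.\<close>
  have "(\<Sum>i\<in>I. p i * (ln (y i) - ln Y)) \<le> (\<Sum>i\<in>I. p i * (y i / Y - 1))"
  proof (rule sum_mono)
    fix i assume i: "i \<in> I"
    have "ln (y i) - ln Y = ln (y i / Y)" using assms(4)[OF i] Y by (simp add: ln_div)
    also have "\<dots> \<le> y i / Y - 1" by (rule ln_le_minus_one) (use assms(4)[OF i] Y in auto)
    finally show "p i * (ln (y i) - ln Y) \<le> p i * (y i / Y - 1)" using assms(2)[OF i] by (rule mult_left_mono)
  qed
  also have "\<dots> = 0" unfolding Y_def using assms(3) Y
    by (simp add: right_diff_distrib sum_subtractf sum_divide_distrib[symmetric] mult.assoc Y_def)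
  finally show ?thesis using assms(3) unfolding Y_def
    by (simp add: right_diff_distrib sum_subtractf sum_distrib_right[symmetric])
qed

lemma ln_one_minus_weighted_ge:
  fixes z q :: "'a \<Rightarrow> real"
  assumes "finite I" "\<alpha> > 0" "\<And>i. i \<in> I \<Longrightarrow> z i \<ge> 0" "(\<Sum>i\<in>I. z i) = \<alpha>" "\<And>i. i \<in> I \<Longrightarrow> q i > \<alpha>"
  shows "(1 / \<alpha>) * (\<Sum>i\<in>I. z i * ln (1 - \<alpha> / q i)) \<le> ln (1 - (\<Sum>i\<in>I. z i / q i))"
proof -
  have y_pos: "1 - \<alpha> / q i > 0" if "i \<in> I" for i
    using assms(2) assms(5)[OF that] by (simp add: field_simps)
  have "(\<Sum>i\<in>I. z i / \<alpha> * ln (1 - \<alpha> / q i)) \<le> ln (\<Sum>i\<in>I. z i / \<alpha> * (1 - \<alpha> / q i))"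
    by (rule weighted_ln_le_ln_weighted)
      (use assms y_pos in \<open>auto simp: sum_divide_distrib[symmetric]\<close>)
  also have "(\<Sum>i\<in>I. z i / \<alpha> * (1 - \<alpha> / q i)) = 1 - (\<Sum>i\<in>I. z i / q i)"
    using assms(2,4) by (simp add: algebra_simps sum_subtractf sum_divide_distrib[symmetric])
  finally show ?thesis by (simp add: sum_distrib_left)
qed

lemma Chebyshev_sum_similarly_ordered:
  fixes a b :: "'a \<Rightarrow> real"
  assumes "\<And>i l. i \<in> I \<Longrightarrow> l \<in> I \<Longrightarrow> (a i - a l) * (b i - b l) \<ge> 0"
  shows "(\<Sum>i\<in>I. a i) * (\<Sum>i\<in>I. b i) \<le> real (card I) * (\<Sum>i\<in>I. a i * b i)"
proof -
  have "0 \<le> (\<Sum>i\<in>I. \<Sum>l\<in>I. (a i - a l) * (b i - b l))"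
    by (intro sum_nonneg) (use assms in auto)
  also have "\<dots> = (\<Sum>i\<in>I. \<Sum>l\<in>I. a i * b i) + (\<Sum>i\<in>I. \<Sum>l\<in>I. a l * b l)
                   - (\<Sum>i\<in>I. \<Sum>l\<in>I. a i * b l) - (\<Sum>i\<in>I. \<Sum>l\<in>I. a l * b i)"
    by (simp add: algebra_simps sum.distrib sum_subtractf)
  also have "(\<Sum>i\<in>I. \<Sum>l\<in>I. a i * b i) = real (card I) * (\<Sum>i\<in>I. a i * b i)"
    by (simp add: sum_distrib_left mult.commute)
  also have "(\<Sum>i\<in>I. \<Sum>l\<in>I. a l * b l) = real (card I) * (\<Sum>i\<in>I. a i * b i)"
    by simp
  also have "(\<Sum>i\<in>I. \<Sum>l\<in>I. a i * b l) = (\<Sum>i\<in>I. a i) * (\<Sum>i\<in>I. b i)"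
    by (simp add: sum_product)
  also have "(\<Sum>i\<in>I. \<Sum>l\<in>I. a l * b i) = (\<Sum>i\<in>I. a i) * (\<Sum>i\<in>I. b i)"
    by (subst sum.swap) (simp add: sum_product)
  finally show ?thesis by simp
qed

lemma ln_one_minus_resolvent_ge:
  assumes U: "unitary n U" and w: "w \<in> carrier_vec n" "sqnorm w = \<alpha>" and \<alpha>: "\<alpha> > 0"
    and gap: "\<And>i. i < n \<Longrightarrow> lam i + \<alpha> < u"
  shows "(1 / \<alpha>) * (\<Sum>i<n. eigen_weight U w i * ln (1 - \<alpha> / (u - lam i)))
         \<le> ln (1 - (\<Sum>i<n. eigen_weight U w i / (u - lam i)))"
proof (rule ln_one_minus_weighted_ge)
  show "(\<Sum>i<n. eigen_weight U w i) = \<alpha>" using sum_eigen_weight[OF U w(1)] w(2) by simp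
  show "\<alpha> < u - lam i" if "i \<in> {..<n}" for i using gap that by force
qed (use \<alpha> in \<open>auto simp: eigen_weight_def\<close>)

lemma sum_ln_one_minus_resolvent_ge:
  assumes U: "unitary n U" and B: "finite B"
    and v: "\<And>k. k \<in> B \<Longrightarrow> v k \<in> carrier_vec n" "\<And>k. k \<in> B \<Longrightarrow> sqnorm (v k) = \<alpha>"
    and \<alpha>: "\<alpha> > 0" and gap: "\<And>i. i < n \<Longrightarrow> lam i + \<alpha> < u"
    and weights: "\<And>i. i < n \<Longrightarrow> (\<Sum>k\<in>B. eigen_weight U (v k) i) = 1 - lam i"
  shows "(1 / \<alpha>) * ((\<Sum>i<n. 1 - lam i) / n) * (\<Sum>i<n. ln (1 - \<alpha> / (u - lam i)))
         \<le> (\<Sum>k\<in>B. ln (1 - (\<Sum>i<n. eigen_weight U (v k) i / (u - lam i))))"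
proof -
  define L where "L i = ln (1 - \<alpha> / (u - lam i))" for i
  \<comment> \<open>Both 1 - lam i and L i decrease in lam i, so Chebyshev's inequality applies.\<close>
  have L_mono: "L l \<le> L i" if "i < n" "l < n" "lam i \<le> lam l" for i l
  proof -
    have "\<alpha> / (u - lam i) \<le> \<alpha> / (u - lam l)"
      using gap[of l] that \<alpha> by (intro divide_left_mono) auto
    moreover have "0 < 1 - \<alpha> / (u - lam l)" using gap[OF that(2)] \<alpha> by (simp add: field_simps)
    ultimately show ?thesis unfolding L_def by simp
  qed
  have "0 \<le> ((1 - lam i) - (1 - lam l)) * (L i - L l)" if "i \<in> {..<n}" "l \<in> {..<n}" for i l
    using L_mono[of i l] L_mono[of l i] that
    by (cases "lam i \<le> lam l") (auto intro: mult_nonneg_nonneg mult_nonpos_nonpos)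
  then have "(\<Sum>i<n. 1 - lam i) * (\<Sum>i<n. L i) \<le> real n * (\<Sum>i<n. (1 - lam i) * L i)"
    using Chebyshev_sum_similarly_ordered[of "{..<n}" "\<lambda>i. 1 - lam i" L] by simp
  then have "((\<Sum>i<n. 1 - lam i) / n) * (\<Sum>i<n. L i) \<le> (\<Sum>i<n. (1 - lam i) * L i)"
    by (cases "n = 0") (simp_all add: field_simps)
  also have "\<dots> = (\<Sum>i<n. \<Sum>k\<in>B. eigen_weight U (v k) i * L i)"
    using weights by (intro sum.cong) (simp_all add: sum_distrib_right[symmetric])
  also have "\<dots> = (\<Sum>k\<in>B. \<Sum>i<n. eigen_weight U (v k) i * L i)"
    by (rule sum.swap)
  finally have "(1 / \<alpha>) * (((\<Sum>i<n. 1 - lam i) / n) * (\<Sum>i<n. L i))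
      \<le> (1 / \<alpha>) * (\<Sum>k\<in>B. \<Sum>i<n. eigen_weight U (v k) i * L i)"
    using \<alpha> by (intro mult_left_mono) auto
  then have "(1 / \<alpha>) * ((\<Sum>i<n. 1 - lam i) / n) * (\<Sum>i<n. L i)
      \<le> (\<Sum>k\<in>B. (1 / \<alpha>) * (\<Sum>i<n. eigen_weight U (v k) i * L i))"
    by (simp only: mult.assoc sum_distrib_left)
  also have "\<dots> \<le> (\<Sum>k\<in>B. ln (1 - (\<Sum>i<n. eigen_weight U (v k) i / (u - lam i))))"
    unfolding L_def using ln_one_minus_resolvent_ge[OF U v(1) v(2) \<alpha> gap] by (intro sum_mono) auto
  finally show ?thesis unfolding L_def .
qed

lemma sum_potential_drop_ge:
  assumes U: "unitary n U" and A: "A = U * mat_diag n (\<lambda>i. of_real (lam i)) * mat_adjoint U"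
    and B: "finite B" "c \<le> real (card B)"
    and v: "\<And>k. k \<in> B \<Longrightarrow> v k \<in> carrier_vec n" "\<And>k. k \<in> B \<Longrightarrow> sqnorm (v k) = \<alpha>"
    and \<alpha>: "\<alpha> > 0" and le: "\<And>i. i < n \<Longrightarrow> lam i \<le> l"
    and u: "l < u" "u \<le> u'" "l + \<alpha> < u'"
    and weights: "\<And>i. i < n \<Longrightarrow> (\<Sum>k\<in>B. eigen_weight U (v k) i) = 1 - lam i"
  shows "c * trlog (minv (of_real u \<cdot>\<^sub>m 1\<^sub>m n - A) * (of_real u' \<cdot>\<^sub>m 1\<^sub>m n - A))
         + (1 / \<alpha>) * ((\<Sum>i<n. 1 - lam i) / n)
           * trlog (1\<^sub>m n - of_real \<alpha> \<cdot>\<^sub>m minv (of_real u' \<cdot>\<^sub>m 1\<^sub>m n - A))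
         \<le> (\<Sum>k\<in>B. Phi n u A - Phi n u' (A + outer (v k)))"
proof -
  have lt: "lam i < u" "lam i < u'" "lam i + \<alpha> < u'" if "i < n" for i
    using le[OF that] u by auto
  define T where "T = (\<Sum>i<n. ln (u' - lam i) - ln (u - lam i))"
  have T: "0 \<le> T" unfolding T_def using lt u(2) by (intro sum_nonneg) auto
  have drop: "Phi n u A - Phi n u' (A + outer (v k))
      = T + ln (1 - (\<Sum>i<n. eigen_weight U (v k) i / (u' - lam i)))" if k: "k \<in> B" for k
    using Phi_unitary_diag[OF U lt(1)] Phi_rank_one_update(2)[OF U A v(1)[OF k] le]
      u(3) v(2)[OF k] unfolding A T_def by (simp add: sum_subtractf)
  have "c * T + (1 / \<alpha>) * ((\<Sum>i<n. 1 - lam i) / n) * (\<Sum>i<n. ln (1 - \<alpha> / (u' - lam i)))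
      \<le> real (card B) * T + (\<Sum>k\<in>B. ln (1 - (\<Sum>i<n. eigen_weight U (v k) i / (u' - lam i))))"
    using mult_right_mono[OF B(2) T] sum_ln_one_minus_resolvent_ge[OF U B(1) v \<alpha> lt(3) weights]
    by linarith
  also have "\<dots> = (\<Sum>k\<in>B. Phi n u A - Phi n u' (A + outer (v k)))"
    using drop by (simp add: sum.distrib)
  moreover have "trlog (minv (of_real u \<cdot>\<^sub>m 1\<^sub>m n - A) * (of_real u' \<cdot>\<^sub>m 1\<^sub>m n - A)) = T"
    unfolding T_def by (rule trlog_resolvent_mult[OF U A]) (use lt in auto)
  moreover have "trlog (1\<^sub>m n - of_real \<alpha> \<cdot>\<^sub>m minv (of_real u' \<cdot>\<^sub>m 1\<^sub>m n - A))
      = (\<Sum>i<n. ln (1 - \<alpha> / (u' - lam i)))"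
    by (rule trlog_one_minus_resolvent[OF U A]) (use lt in fastforce)
  ultimately show ?thesis by simp
qed

section \<open>Algorithm 1\<close>

lemma alg_run_chosen_less: "alg_run d m \<alpha> v \<sigma> \<Longrightarrow> i < m div 2 \<Longrightarrow> \<sigma> i < m"
  unfolding alg_run_def Balg_def by auto

lemma alg_run_inj_on:
  assumes run: "alg_run d m \<alpha> v \<sigma>" and j: "j \<le> m div 2"
  shows "inj_on \<sigma> {..<j}"
proof (rule linorder_inj_onI')
  fix a b assume "a \<in> {..<j}" "b \<in> {..<j}" "a < b"
  then have "\<sigma> b \<in> Balg m \<sigma> b" "\<sigma> a \<in> \<sigma> ` {..<b}"
    using run j unfolding alg_run_def by auto
  then show "\<sigma> a \<noteq> \<sigma> b" unfolding Balg_def by auto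
qed

lemma card_Balg_ge: "m - j \<le> card (Balg m \<sigma> j)"
proof -
  have "card {0..<m} \<le> card (Balg m \<sigma> j \<union> \<sigma> ` {..<j})"
    by (rule card_mono) (auto simp: Balg_def)
  also have "\<dots> \<le> card (Balg m \<sigma> j) + j"
    using card_Un_le[of "Balg m \<sigma> j" "\<sigma> ` {..<j}"] card_image_le[of "{..<j}" \<sigma>] by simp
  finally show ?thesis by simp
qed

lemma Aalg_eq_msum: "Aalg d v \<sigma> j = msum d (\<lambda>l. outer (v (\<sigma> l))) j"
  by (induction j) auto

lemma hermitian_Aalg: "(\<And>l. l < j \<Longrightarrow> dim_vec (v (\<sigma> l)) = d) \<Longrightarrow> hermitian d (Aalg d v \<sigma> j)"
proof (induction j)
  case 0
  then show ?case unfolding hermitian_def by auto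
next
  case (Suc j)
  have "hermitian d (outer (v (\<sigma> j)))" by (rule hermitian_outer) (use Suc.prems in auto)
  moreover have "hermitian d (Aalg d v \<sigma> j)" using Suc by simp
  ultimately show ?case by (simp add: hermitian_add)
qed

lemma isotropic_sum_sqnorm:
  assumes v: "\<And>k. k < m \<Longrightarrow> dim_vec (v k) = d" and iso: "msum d (\<lambda>k. outer (v k)) m = 1\<^sub>m d"
  shows "(\<Sum>k<m. sqnorm (v k)) = real d"
proof -
  have "(\<Sum>k<m. (cmod (v k $ a))\<^sup>2) = 1" if a: "a < d" for a
  proof -
    have "of_real (\<Sum>k<m. (cmod (v k $ a))\<^sup>2) = (\<Sum>k<m. v k $ a * cnj (v k $ a))"
      unfolding of_real_sum complex_norm_square ..
    also have "\<dots> = 1" using index_msum_outer[of m v, OF v a a] iso a by simp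
    finally show ?thesis by (metis of_real_eq_1_iff)
  qed
  then have "(\<Sum>a<d. \<Sum>k<m. (cmod (v k $ a))\<^sup>2) = real d" by simp
  then show ?thesis unfolding sqnorm_def using v by (simp add: sum.swap[of _ "{..<d}"])
qed

lemma sum_eigen_weight_Aalg:
  assumes U: "unitary d U" and A: "Aalg d v \<sigma> j = U * mat_diag d (\<lambda>i. of_real (lam i)) * mat_adjoint U"
    and v: "\<And>l. l < j \<Longrightarrow> v (\<sigma> l) \<in> carrier_vec d" and i: "i < d"
  shows "(\<Sum>l<j. eigen_weight U (v (\<sigma> l)) i) = lam i"
  using sum_eigen_weight_msum_outer[where f = "\<lambda>l. v (\<sigma> l)", OF U v i]
    Re_cinner_col_unitary_diag[OF U i] A unfolding Aalg_eq_msum by simp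

lemma sum_eigenvalues_Aalg:
  assumes U: "unitary d U" and A: "Aalg d v \<sigma> j = U * mat_diag d (\<lambda>i. of_real (lam i)) * mat_adjoint U"
    and v: "\<And>l. l < j \<Longrightarrow> v (\<sigma> l) \<in> carrier_vec d" "\<And>l. l < j \<Longrightarrow> sqnorm (v (\<sigma> l)) = \<alpha>"
  shows "(\<Sum>i<d. lam i) = real j * \<alpha>"
proof -
  have "(\<Sum>i<d. lam i) = (\<Sum>i<d. \<Sum>l<j. eigen_weight U (v (\<sigma> l)) i)"
    using sum_eigen_weight_Aalg[OF U A v(1)] by simp
  also have "\<dots> = (\<Sum>l<j. \<Sum>i<d. eigen_weight U (v (\<sigma> l)) i)"
    by (rule sum.swap)
  also have "\<dots> = (\<Sum>l<j. sqnorm (v (\<sigma> l)))"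
    using sum_eigen_weight[OF U v(1)] by simp
  finally show ?thesis using v(2) by simp
qed

lemma sum_eigen_weight_Balg:
  assumes run: "alg_run d m \<alpha> v \<sigma>" and j: "j \<le> m div 2"
    and v: "\<And>k. k < m \<Longrightarrow> v k \<in> carrier_vec d" and iso: "msum d (\<lambda>k. outer (v k)) m = 1\<^sub>m d"
    and U: "unitary d U" and A: "Aalg d v \<sigma> j = U * mat_diag d (\<lambda>i. of_real (lam i)) * mat_adjoint U"
    and i: "i < d"
  shows "(\<Sum>k\<in>Balg m \<sigma> j. eigen_weight U (v k) i) = 1 - lam i"
proof -
  have chosen: "\<sigma> ` {..<j} \<subseteq> {..<m}" using alg_run_chosen_less[OF run] j by force
  have "(\<Sum>k<m. eigen_weight U (v k) i) = Re (cinner (col U i) (col U i))"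
    using sum_eigen_weight_msum_outer[where f = v, OF U v i] iso unitaryD(1)[OF U] i by simp
  also have "\<dots> = 1" unfolding cinner_self using sqnorm_col_unitary[OF U i] by simp
  finally have all: "(\<Sum>k<m. eigen_weight U (v k) i) = 1" .
  have "(\<Sum>k\<in>Balg m \<sigma> j. eigen_weight U (v k) i)
      = (\<Sum>k<m. eigen_weight U (v k) i) - (\<Sum>k\<in>\<sigma> ` {..<j}. eigen_weight U (v k) i)"
    unfolding Balg_def atLeast0LessThan by (rule sum_diff) (use chosen in auto)
  also have "(\<Sum>k\<in>\<sigma> ` {..<j}. eigen_weight U (v k) i) = (\<Sum>l<j. eigen_weight U (v (\<sigma> l)) i)"
    by (rule sum.reindex_cong[OF alg_run_inj_on[OF run j] refl refl])
  also have "\<dots> = lam i"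
    by (rule sum_eigen_weight_Aalg[OF U A _ i]) (use v chosen in auto)
  finally show ?thesis using all by simp
qed

lemma Algorithm1_potential_drop_ge:
  assumes v: "\<And>k. k < m \<Longrightarrow> v k \<in> carrier_vec d"
    and isotropic: "msum d (\<lambda>k. outer (v k)) m = 1\<^sub>m d"
    and norms: "\<And>k. k < m \<Longrightarrow> sqnorm (v k) = \<alpha>"
    and run: "alg_run d m \<alpha> v \<sigma>" and jlt: "j < m div 2"
    and d: "0 < d" and small: "\<alpha> < 1/3"
    and gap: "1/3 \<le> ualg \<alpha> d j - lmax (Aalg d v \<sigma> j)"
  shows "real (m - j) *
           trlog (minv (of_real (ualg \<alpha> d j) \<cdot>\<^sub>m 1\<^sub>m d - Aalg d v \<sigma> j)
                  * (of_real (ualg \<alpha> d (Suc j)) \<cdot>\<^sub>m 1\<^sub>m d - Aalg d v \<sigma> j))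
         + (1 / \<alpha>) * (real (m - j) / real m) *
           trlog (1\<^sub>m d - of_real \<alpha> \<cdot>\<^sub>m minv (of_real (ualg \<alpha> d (Suc j)) \<cdot>\<^sub>m 1\<^sub>m d - Aalg d v \<sigma> j))
         \<le> (\<Sum>k\<in>Balg m \<sigma> j.
               Phi d (ualg \<alpha> d j) (Aalg d v \<sigma> j)
               - Phi d (ualg \<alpha> d (Suc j)) (Aalg d v \<sigma> j + outer (v k)))"
proof -
  have chosen: "\<sigma> l < m" if "l < j" for l using alg_run_chosen_less[OF run] jlt that by simp
  have "hermitian d (Aalg d v \<sigma> j)" by (rule hermitian_Aalg) (use chosen v in auto)
  then obtain U lam where U: "unitary d U"
    and A: "Aalg d v \<sigma> j = U * mat_diag d (\<lambda>i. of_real (lam i)) * mat_adjoint U"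
    using hermitian_unitary_diagonalizable by blast
  have m_\<alpha>: "real m * \<alpha> = real d"
    using isotropic_sum_sqnorm[of m v d] v isotropic norms by simp
  then have "0 < real m * \<alpha>" using d by simp
  then have \<alpha>: "0 < \<alpha>" by (simp add: zero_less_mult_iff)
  have "(real d - real j * \<alpha>) / real d = (real m - real j) / real m"
    unfolding m_\<alpha>[symmetric] using \<alpha> jlt by (simp add: field_simps)
  then have frac: "(real d - real j * \<alpha>) / real d = real (m - j) / real m"
    using jlt by (simp add: of_nat_diff)
  have mono: "ualg \<alpha> d j \<le> ualg \<alpha> d (Suc j)"
    using \<alpha> by (simp add: ualg_def divide_right_mono)
  have trace: "(\<Sum>i<d. 1 - lam i) = real d - real j * \<alpha>"
    using sum_eigenvalues_Aalg[OF U A, of \<alpha>] chosen v norms by (simp add: sum_subtractf)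
  show ?thesis unfolding frac[symmetric] trace[symmetric]
  proof (rule sum_potential_drop_ge[OF U A])
    show "\<And>k. k \<in> Balg m \<sigma> j \<Longrightarrow> v k \<in> carrier_vec d"
      "\<And>k. k \<in> Balg m \<sigma> j \<Longrightarrow> sqnorm (v k) = \<alpha>"
      using v norms by (auto simp: Balg_def)
    show "\<And>i. i < d \<Longrightarrow> (\<Sum>k\<in>Balg m \<sigma> j. eigen_weight U (v k) i) = 1 - lam i"
      using sum_eigen_weight_Balg[OF run _ v isotropic U A] jlt by simp
  qed (use \<alpha> small gap mono card_Balg_ge[of m j \<sigma>] eigenvalue_le_lmax[OF U A]
    in \<open>auto simp: Balg_def\<close>)
qed

theorem lemma3p5:
  fixes d m j :: nat and \<alpha> :: real and v :: "nat \<Rightarrow> complex vec" and \<sigma> :: "nat \<Rightarrow> nat"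
  assumes dimv: "\<forall>i<m. dim_vec (v i) = d"
    and meven: "even m"
    and isotropic: "msum d (\<lambda>i. outer (v i)) m = 1\<^sub>m d"
    and norms: "\<forall>i<m. sqnorm (v i) = \<alpha>"
    and alpha_le: "\<alpha> \<le> 1 / (221 * real d)"
    and run: "alg_run d m \<alpha> v \<sigma>"
    and jlt: "j < m div 2"
    and gap: "\<forall>j'\<le>j. ualg \<alpha> d j' - lmax (Aalg d v \<sigma> j') \<ge> 1/3"
    and cond: "\<forall>j'\<le>j. kappa (of_real (ualg \<alpha> d j') \<cdot>\<^sub>m 1\<^sub>m d - Aalg d v \<sigma> j') \<le> 3/2"
  shows "(\<Sum>k\<in>Balg m \<sigma> j.
            Phi d (ualg \<alpha> d j) (Aalg d v \<sigma> j)
            - Phi d (ualg \<alpha> d (Suc j)) (Aalg d v \<sigma> j + outer (v k)))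
         \<ge> real (m - j) *
             trlog (minv (of_real (ualg \<alpha> d j) \<cdot>\<^sub>m 1\<^sub>m d - Aalg d v \<sigma> j)
                    * (of_real (ualg \<alpha> d (Suc j)) \<cdot>\<^sub>m 1\<^sub>m d - Aalg d v \<sigma> j))
           + (1 / \<alpha>) * (real (m - j) / real m) *
             trlog (1\<^sub>m d - of_real \<alpha> \<cdot>\<^sub>m minv (of_real (ualg \<alpha> d (Suc j)) \<cdot>\<^sub>m 1\<^sub>m d - Aalg d v \<sigma> j))"
proof (cases "d = 0")
  case True
  have "hermitian d (Aalg d v \<sigma> j)"
    using alg_run_chosen_less[OF run] jlt dimv by (intro hermitian_Aalg) auto
  then have A: "Aalg d v \<sigma> j \<in> carrier_mat d d" by (rule hermitian_carrier)
  have trlog_0: "trlog M = 0" if "M \<in> carrier_mat d d" for M using trlog_carrier_0 that True by simp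
  have "Phi d x X = 0" if "X \<in> carrier_mat d d" for x X
    unfolding Phi_def by (rule trlog_0, rule minv_carrier) (use that in auto)
  moreover have R: "minv (of_real x \<cdot>\<^sub>m 1\<^sub>m d - Aalg d v \<sigma> j) \<in> carrier_mat d d" for x
    by (rule minv_carrier) (use A in auto)
  moreover have "trlog (minv (of_real x \<cdot>\<^sub>m 1\<^sub>m d - Aalg d v \<sigma> j) * (of_real y \<cdot>\<^sub>m 1\<^sub>m d - Aalg d v \<sigma> j)) = 0"
    "trlog (1\<^sub>m d - of_real a \<cdot>\<^sub>m minv (of_real y \<cdot>\<^sub>m 1\<^sub>m d - Aalg d v \<sigma> j)) = 0" for x y a
    using R[of x] R[of y] A by (auto intro!: trlog_0)
  ultimately show ?thesis using A dimv by (simp add: Balg_def)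
next
  case False
  have "1 / (221 * real d) \<le> 1 / 221" using False by (simp add: field_simps)
  then have "\<alpha> < 1 / 3" using alpha_le by linarith
  show ?thesis
    by (rule Algorithm1_potential_drop_ge[OF _ isotropic _ run jlt])
      (use dimv norms gap False \<open>\<alpha> < 1 / 3\<close> in auto)
qed

end
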